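(* Let $W_i\sim\hat N(0,[\underline\sigma^2,\overline\sigma^2])$ with decompositions $W_i=V_i\epsilon_i$, $i=1,\dots,n$, and let $\varphi\in C_{l.Lip}(\mathbb R^n)$ be convex or concave. Then $\hat{\mathbb E}[\varphi(W_1,\dots,W_n)]$ takes the same value whether $W_1,\dots,W_n$ are sequentially independent ($W_1\dashrightarrow\cdots\dashrightarrow W_n$) or semi-sequentially independent ($V_1\dashrightarrow\cdots\dashrightarrow V_n\dashrightarrow\epsilon_1\dashrightarrow\cdots\dashrightarrow\epsilon_n$), and in either case $$\hat{\mathbb E}[\varphi(W_1,\dots,W_n)]=\begin{cases}E[\varphi(\underline\sigma\varepsilon_1,\dots,\underline\sigma\varepsilon_n)]&\varphi\text{ concave},\\ E[\varphi(\overline\sigma\varepsilon_1,\dots,\overline\sigma\varepsilon_n)]&\varphi\text{ convex},\end{cases}$$ where $\varepsilon_1,\dots,\varepsilon_n$ are classical i.i.d. $N(0,1)$.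
   Context: Sublinear expectation space $(\Omega,\mathcal H,\hat{\mathbb E})$, $\hat{\mathbb E}[X]=\sup_{Q\in\mathcal P}E_Q[X]$. $C_{b,Lip}$: bounded Lipschitz; $C_{l.Lip}(\mathbb R^n)$: $|\varphi(x)-\varphi(y)|\le C(1+|x|^k+|y|^k)|x-y|$. $X\dashrightarrow Y$ means $\hat{\mathbb E}[\varphi(X,Y)]=\hat{\mathbb E}[\hat{\mathbb E}[\varphi(x,Y)]_{x=X}]$ for all $\varphi\in C_{b,Lip}$; chains mean $(X_1,\dots,X_i)\dashrightarrow X_{i+1}$ for each $i$. $V\sim\mathcal M[\underline\sigma,\overline\sigma]$: $\hat{\mathbb E}[\varphi(V)]=\max_{v\in[\underline\sigma,\overline\sigma]}\varphi(v)$. $\epsilon\sim N(0,1)$: $\hat{\mathbb E}[\varphi(\epsilon)]=E[\varphi(Z)]$, $Z$ classical standard normal. Semi-$G$-normal $W\sim\hat N(0,[\underline\sigma^2,\overline\sigma^2])$ ($0\le\underline\sigma\le\overline\sigma$): $W=V\epsilon$ with $V\sim\mathcal M[\underline\sigma,\overline\sigma]$, $\epsilon\sim N(0,1)$, $V\dashrightarrow\epsilon$. *)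

theory Defs
  imports "HOL-Probability.Probability"
begin

text \<open>Points of R^k are represented as real lists of length k.\<close>

definition vnorm :: "real list \<Rightarrow> real" where
  "vnorm xs = sqrt (\<Sum>x\<leftarrow>xs. x ^ 2)"

definition vdist :: "real list \<Rightarrow> real list \<Rightarrow> real" where
  "vdist xs ys = vnorm (map2 (-) xs ys)"

definition bLip :: "nat \<Rightarrow> (real list \<Rightarrow> real) \<Rightarrow> bool" where
  "bLip k \<phi> \<longleftrightarrow>
     (\<exists>C. \<forall>x. length x = k \<longrightarrow> \<bar>\<phi> x\<bar> \<le> C) \<and>
     (\<exists>L. \<forall>x y. length x = k \<longrightarrow> length y = k \<longrightarrow> \<bar>\<phi> x - \<phi> y\<bar> \<le> L * vdist x y)"

definition lLip :: "nat \<Rightarrow> (real list \<Rightarrow> real) \<Rightarrow> bool" where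
  "lLip k \<phi> \<longleftrightarrow>
     (\<exists>C (m::nat). \<forall>x y. length x = k \<longrightarrow> length y = k \<longrightarrow>
        \<bar>\<phi> x - \<phi> y\<bar> \<le> C * (1 + vnorm x ^ m + vnorm y ^ m) * vdist x y)"

definition convex_fn :: "nat \<Rightarrow> (real list \<Rightarrow> real) \<Rightarrow> bool" where
  "convex_fn k \<phi> \<longleftrightarrow>
     (\<forall>x y t. length x = k \<longrightarrow> length y = k \<longrightarrow> 0 \<le> t \<longrightarrow> t \<le> 1 \<longrightarrow>
        \<phi> (map2 (\<lambda>a b. t * a + (1 - t) * b) x y) \<le> t * \<phi> x + (1 - t) * \<phi> y)"

definition concave_fn :: "nat \<Rightarrow> (real list \<Rightarrow> real) \<Rightarrow> bool" where
  "concave_fn k \<phi> \<longleftrightarrow> convex_fn k (\<lambda>x. - \<phi> x)"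

text \<open>Sublinear expectation space (\<Omega>, H, E) with E[X] = sup_{Q in P} E_Q[X]:
  P is a nonempty family of probability measures on the measurable space M,
  every X in H is measurable, Q-integrable for all Q in P with bounded expectations,
  H contains the constants and is closed under C_{l.Lip} transformations.\<close>
definition sublinear_space :: "'a measure \<Rightarrow> 'a measure set \<Rightarrow> ('a \<Rightarrow> real) set \<Rightarrow> bool" where
  "sublinear_space M P H \<longleftrightarrow>
     P \<noteq> {} \<and>
     (\<forall>Q\<in>P. prob_space Q \<and> sets Q = sets M \<and> space Q = space M) \<and>
     (\<forall>X\<in>H. X \<in> borel_measurable M \<and> (\<forall>Q\<in>P. integrable Q X) \<and>
             bdd_above ((\<lambda>Q. integral\<^sup>L Q X) ` P)) \<and>
     (\<forall>c. (\<lambda>_. c) \<in> H) \<and>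
     (\<forall>Xs \<phi>. set Xs \<subseteq> H \<longrightarrow> lLip (length Xs) \<phi> \<longrightarrow>
        (\<lambda>\<omega>. \<phi> (map (\<lambda>X. X \<omega>) Xs)) \<in> H)"

definition sE :: "'a measure set \<Rightarrow> ('a \<Rightarrow> real) \<Rightarrow> real" where
  "sE P X = (SUP Q\<in>P. integral\<^sup>L Q X)"

definition vals :: "('a \<Rightarrow> real) list \<Rightarrow> 'a \<Rightarrow> real list" where
  "vals Xs \<omega> = map (\<lambda>X. X \<omega>) Xs"

definition indep_of :: "'a measure set \<Rightarrow> ('a \<Rightarrow> real) list \<Rightarrow> ('a \<Rightarrow> real) \<Rightarrow> bool" where
  "indep_of P Xs Y \<longleftrightarrow>
     (\<forall>\<phi>. bLip (length Xs + 1) \<phi> \<longrightarrow>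
        sE P (\<lambda>\<omega>. \<phi> (vals Xs \<omega> @ [Y \<omega>])) =
        sE P (\<lambda>\<omega>. sE P (\<lambda>\<omega>'. \<phi> (vals Xs \<omega> @ [Y \<omega>']))))"

definition seq_indep :: "'a measure set \<Rightarrow> ('a \<Rightarrow> real) list \<Rightarrow> bool" where
  "seq_indep P Zs \<longleftrightarrow> (\<forall>i. 0 < i \<and> i < length Zs \<longrightarrow> indep_of P (take i Zs) (Zs ! i))"

definition maximal_dist :: "'a measure set \<Rightarrow> ('a \<Rightarrow> real) \<Rightarrow> real \<Rightarrow> real \<Rightarrow> bool" where
  "maximal_dist P V a b \<longleftrightarrow>
     (\<forall>\<phi>. lLip 1 \<phi> \<longrightarrow> sE P (\<lambda>\<omega>. \<phi> [V \<omega>]) = (SUP v\<in>{a..b}. \<phi> [v]))"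

definition std_gauss :: "real measure" where
  "std_gauss = density lborel std_normal_density"

definition std_normal_dist :: "'a measure set \<Rightarrow> ('a \<Rightarrow> real) \<Rightarrow> bool" where
  "std_normal_dist P e \<longleftrightarrow>
     (\<forall>\<phi>. lLip 1 \<phi> \<longrightarrow> sE P (\<lambda>\<omega>. \<phi> [e \<omega>]) = (\<integral>z. \<phi> [z] \<partial>std_gauss))"

definition classical_E :: "nat \<Rightarrow> (real list \<Rightarrow> real) \<Rightarrow> real \<Rightarrow> real" where
  "classical_E n \<phi> s =
     (\<integral>z. \<phi> (map (\<lambda>i. s * z i) [0..<n]) \<partial>(PiM {..<n} (\<lambda>_. std_gauss)))"

end

theory Submission
  imports Defs
begin

text \<open>Both independence structures reduce the claim, by backward induction, to one-dimensional
  problems.  For \<open>W = V \<epsilon>\<close> with \<open>V \<sim> M[\<sigma>\<^sub>l, \<sigma>\<^sub>u]\<close>, \<open>\<epsilon> \<sim> N(0,1)\<close> and \<open>V \<dashrightarrow> \<epsilon>\<close>, the sublinear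
  expectation of \<open>\<psi>(c, W)\<close> is \<open>sup\<^sub>v E[\<psi>(c, v \<epsilon>)]\<close> over \<open>v \<in> [\<sigma>\<^sub>l, \<sigma>\<^sub>u]\<close>.  By the symmetry
  of the Gaussian, \<open>v \<mapsto> E[\<psi>(c, v \<epsilon>)]\<close> is nondecreasing on \<open>[0, \<infinity>)\<close> for convex \<open>\<psi>\<close> and
  nonincreasing for concave \<open>\<psi>\<close>, so the supremum sits at \<open>\<sigma>\<^sub>u\<close>, resp. \<open>\<sigma>\<^sub>l\<close>, whatever \<open>c\<close> is.
  Convexity survives Gaussian integration of some coordinates, so when \<open>W\<^sub>1 \<dashrightarrow> \<dots> \<dashrightarrow> W\<^sub>n\<close>
  every step of the induction is such a problem with the same extreme scale, and the result is the
  classical expectation with all scales equal to it.  When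
  \<open>V\<^sub>1 \<dashrightarrow> \<dots> \<dashrightarrow> V\<^sub>n \<dashrightarrow> \<epsilon>\<^sub>1 \<dashrightarrow> \<dots> \<dashrightarrow> \<epsilon>\<^sub>n\<close>, the noises are integrated out first; the
  remaining classical expectation \<open>E[\<phi>(v\<^sub>1 \<epsilon>\<^sub>1, \<dots>, v\<^sub>n \<epsilon>\<^sub>n)]\<close> is monotone in each \<open>v\<^sub>i\<close> separately
  by the same symmetry argument, and the scales are then maximised one at a time.
  Throughout, test functions of polynomial growth are reached from the bounded Lipschitz ones
  of the definition of independence by clipping the arguments.\<close>

section \<open>Euclidean geometry of real lists\<close>

lemma sum_list_power2_nonneg: "0 \<le> (\<Sum>x\<leftarrow>xs. (x::real)^2)"
  by (induction xs) auto

lemma vnorm_nonneg [simp]: "0 \<le> vnorm xs"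
  by (simp add: vnorm_def sum_list_power2_nonneg)

lemma vnorm_Nil [simp]: "vnorm [] = 0"
  by (simp add: vnorm_def)

lemma vnorm_singleton [simp]: "vnorm [a] = \<bar>a\<bar>"
  by (simp add: vnorm_def)

lemma vnorm_replicate_0 [simp]: "vnorm (replicate k 0) = 0"
  by (simp add: vnorm_def sum_list_replicate)

lemma vnorm_Cons: "vnorm (a # xs) = sqrt (a^2 + (vnorm xs)^2)"
  by (simp add: vnorm_def sum_list_power2_nonneg)

lemma vnorm_append: "vnorm (xs @ ys) = sqrt ((vnorm xs)^2 + (vnorm ys)^2)"
  by (simp add: vnorm_def sum_list_power2_nonneg)

lemma vnorm_append_le: "vnorm (xs @ ys) \<le> vnorm xs + vnorm ys"
  using sqrt_add_le_add_sqrt[of "(vnorm xs)^2" "(vnorm ys)^2"] by (simp add: vnorm_append)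

lemma vnorm_le_sum_list_abs: "vnorm xs \<le> (\<Sum>x\<leftarrow>xs. \<bar>x\<bar>)"
proof (induction xs)
  case (Cons a xs)
  then show ?case
    using vnorm_append_le[of "[a]" xs] by simp
qed simp

lemma abs_nth_le_vnorm: "i < length xs \<Longrightarrow> \<bar>xs ! i\<bar> \<le> vnorm xs"
proof (induction xs arbitrary: i)
  case (Cons a xs)
  then show ?case
    by (cases i) (auto simp: vnorm_Cons intro: real_le_rsqrt order_trans[OF _ real_sqrt_sum_squares_ge2])
qed simp

lemma vnorm_power2: "(vnorm xs)^2 = (\<Sum>i<length xs. (xs ! i)^2)"
  using sum_list_power2_nonneg[of xs] by (simp add: vnorm_def sum_list_sum_nth atLeast0LessThan)

lemma vdist_nonneg [simp]: "0 \<le> vdist x y"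
  by (simp add: vdist_def)

lemma vdist_self [simp]: "vdist x x = 0"
  by (induction x) (simp_all add: vdist_def vnorm_Cons)

lemma vdist_singleton [simp]: "vdist [a] [b] = \<bar>a - b\<bar>"
  by (simp add: vdist_def)

lemma vdist_Cons: "vdist (a # x) (b # y) = sqrt ((a - b)^2 + (vdist x y)^2)"
  by (simp add: vdist_def vnorm_Cons)

lemma vdist_append:
  "length x = length x' \<Longrightarrow> vdist (x @ y) (x' @ y') = sqrt ((vdist x x')^2 + (vdist y y')^2)"
  by (simp add: vdist_def vnorm_append)

lemma vdist_append_left_cancel: "vdist (p @ x) (p @ y) = vdist x y"
  by (simp add: vdist_append)

lemma vdist_append_right_cancel: "length x = length y \<Longrightarrow> vdist (x @ q) (y @ q) = vdist x y"
  by (simp add: vdist_append)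

lemma vdist_power2: "length x = length y \<Longrightarrow> (vdist x y)^2 = (\<Sum>i<length x. (x ! i - y ! i)^2)"
  by (simp add: vdist_def vnorm_power2)

lemma vdist_replicate_0: "vdist x (replicate (length x) 0) = vnorm x"
  by (induction x) (simp_all add: vdist_Cons vnorm_Cons)

lemma vdist_commute: "length x = length y \<Longrightarrow> vdist x y = vdist y x"
  by (induction x y rule: list_induct2) (simp_all add: vdist_Cons power2_commute)

lemma abs_vnorm_diff_le: "length x = length y \<Longrightarrow> \<bar>vnorm x - vnorm y\<bar> \<le> vdist x y"
proof (induction x y rule: list_induct2)
  case (Cons a x b y)
  have "\<bar>norm (a, vnorm x) - norm (b, vnorm y)\<bar> \<le> norm ((a, vnorm x) - (b, vnorm y))"
    by (rule norm_triangle_ineq3)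
  also have "\<dots> = sqrt ((a - b)^2 + (vnorm x - vnorm y)^2)"
    by (simp add: norm_Pair)
  also have "\<dots> \<le> sqrt ((a - b)^2 + (vdist x y)^2)"
    using Cons.IH by (intro real_sqrt_le_mono add_left_mono) (metis abs_ge_zero power2_abs power_mono)
  finally show ?case
    by (simp add: norm_Pair vnorm_Cons vdist_Cons)
qed simp

section \<open>Locally Lipschitz functions of polynomial growth\<close>

text \<open>A quantitative form of \<^const>\<open>lLip\<close>: the weight \<open>(1 + |x| + |y|)^m\<close> is multiplicative,
  which makes the constants easy to track under substitution and integration.\<close>

definition poly_lip :: "nat \<Rightarrow> (real list \<Rightarrow> real) \<Rightarrow> real \<Rightarrow> nat \<Rightarrow> bool" where
  "poly_lip k f C m \<longleftrightarrow> 0 \<le> C \<and> (\<forall>x y. length x = k \<longrightarrow> length y = k \<longrightarrow>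
      \<bar>f x - f y\<bar> \<le> C * (1 + vnorm x + vnorm y)^m * vdist x y)"

lemma poly_lipI:
  "0 \<le> C \<Longrightarrow> (\<And>x y. length x = k \<Longrightarrow> length y = k \<Longrightarrow>
     \<bar>f x - f y\<bar> \<le> C * (1 + vnorm x + vnorm y)^m * vdist x y) \<Longrightarrow> poly_lip k f C m"
  unfolding poly_lip_def by blast

lemma poly_lipD:
  "poly_lip k f C m \<Longrightarrow> length x = k \<Longrightarrow> length y = k \<Longrightarrow>
     \<bar>f x - f y\<bar> \<le> C * (1 + vnorm x + vnorm y)^m * vdist x y"
  unfolding poly_lip_def by blast

lemma poly_lip_nonneg: "poly_lip k f C m \<Longrightarrow> 0 \<le> C"
  unfolding poly_lip_def by blast

lemma poly_lip_uminus: "poly_lip k f C m \<Longrightarrow> poly_lip k (\<lambda>x. - f x) C m"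
  unfolding poly_lip_def by (simp add: abs_minus_commute)

lemma poly_lip_imp_lLip:
  assumes f: "poly_lip k f C m"
  shows "lLip k f"
proof -
  have "\<bar>f x - f y\<bar> \<le> (C * 3^m) * (1 + vnorm x ^ m + vnorm y ^ m) * vdist x y"
    if "length x = k" "length y = k" for x y
  proof -
    let ?M = "max 1 (max (vnorm x) (vnorm y))"
    have "(1 + vnorm x + vnorm y)^m \<le> (3 * ?M)^m"
      by (intro power_mono) auto
    also have "?M^m \<le> 1 + vnorm x ^ m + vnorm y ^ m"
      by (auto simp: max_def)
    then have "(3 * ?M)^m \<le> 3^m * (1 + vnorm x ^ m + vnorm y ^ m)"
      by (simp add: power_mult_distrib)
    finally have "C * (1 + vnorm x + vnorm y)^m * vdist x y
        \<le> C * (3^m * (1 + vnorm x ^ m + vnorm y ^ m)) * vdist x y"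
      using poly_lip_nonneg[OF f] by (intro mult_right_mono mult_left_mono) auto
    with poly_lipD[OF f that] show ?thesis
      by (simp add: mult.assoc)
  qed
  then show ?thesis
    unfolding lLip_def by blast
qed

lemma lLip_imp_poly_lip:
  assumes "lLip k f"
  obtains C m where "poly_lip k f C m"
proof -
  obtain C m where f: "\<And>x y. length x = k \<Longrightarrow> length y = k \<Longrightarrow>
      \<bar>f x - f y\<bar> \<le> C * (1 + vnorm x ^ m + vnorm y ^ m) * vdist x y"
    using assms unfolding lLip_def by blast
  have "poly_lip k f (3 * \<bar>C\<bar>) m"
  proof (rule poly_lipI)
    fix x y :: "real list"
    assume "length x = k" "length y = k"
    have "1 \<le> (1 + vnorm x + vnorm y)^m" "vnorm x ^ m \<le> (1 + vnorm x + vnorm y)^m"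
      "vnorm y ^ m \<le> (1 + vnorm x + vnorm y)^m"
      by (auto intro!: one_le_power power_mono)
    then have "1 + vnorm x ^ m + vnorm y ^ m \<le> 3 * (1 + vnorm x + vnorm y)^m"
      by linarith
    then have "C * (1 + vnorm x ^ m + vnorm y ^ m) * vdist x y
        \<le> \<bar>C\<bar> * (3 * (1 + vnorm x + vnorm y)^m) * vdist x y"
      by (intro mult_right_mono mult_mono) auto
    with f[OF \<open>length x = k\<close> \<open>length y = k\<close>]
    show "\<bar>f x - f y\<bar> \<le> 3 * \<bar>C\<bar> * (1 + vnorm x + vnorm y)^m * vdist x y"
      by simp
  qed simp
  then show ?thesis
    using that by blast
qed

lemma poly_lip_abs_le:
  assumes f: "poly_lip k f C m" and x: "length x = k"
  shows "\<bar>f x\<bar> \<le> (\<bar>f (replicate k 0)\<bar> + C) * (1 + vnorm x)^Suc m"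
proof -
  have "\<bar>f x - f (replicate k 0)\<bar> \<le> C * (1 + vnorm x)^m * vnorm x"
    using poly_lipD[OF f x, of "replicate k 0"] vdist_replicate_0[of x] x by simp
  also have "\<dots> \<le> C * (1 + vnorm x)^m * (1 + vnorm x)"
    using poly_lip_nonneg[OF f] by (intro mult_left_mono) auto
  also have "\<dots> = C * (1 + vnorm x)^Suc m"
    by simp
  finally have "\<bar>f x\<bar> \<le> \<bar>f (replicate k 0)\<bar> + C * (1 + vnorm x)^Suc m"
    by linarith
  also have "\<dots> \<le> \<bar>f (replicate k 0)\<bar> * (1 + vnorm x)^Suc m + C * (1 + vnorm x)^Suc m"
    using mult_left_mono[OF one_le_power[of "1 + vnorm x" "Suc m"], of "\<bar>f (replicate k 0)\<bar>"]
    by simp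
  finally show ?thesis
    by (simp add: distrib_right)
qed

lemma poly_lip_fix_coords:
  assumes f: "poly_lip (a + b + d) f C m" and p: "length p = a" and q: "length q = d"
  shows "poly_lip b (\<lambda>x. f (p @ x @ q)) (C * (1 + 2 * vnorm p + 2 * vnorm q)^m) m"
proof (rule poly_lipI)
  have C: "0 \<le> C"
    using poly_lip_nonneg[OF f] .
  then show "0 \<le> C * (1 + 2 * vnorm p + 2 * vnorm q)^m"
    by simp
  fix x y :: "real list"
  assume x: "length x = b" and y: "length y = b"
  have nx: "vnorm (p @ x @ q) \<le> vnorm p + vnorm x + vnorm q"
    and ny: "vnorm (p @ y @ q) \<le> vnorm p + vnorm y + vnorm q"
    using vnorm_append_le[of p "x @ q"] vnorm_append_le[of x q]
      vnorm_append_le[of p "y @ q"] vnorm_append_le[of y q] by linarith+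
  have "(1 + 2 * vnorm p + 2 * vnorm q) * (1 + vnorm x + vnorm y)
      = 1 + vnorm x + vnorm y + 2 * vnorm p + 2 * vnorm q + 2 * (vnorm p * vnorm x)
        + 2 * (vnorm p * vnorm y) + 2 * (vnorm q * vnorm x) + 2 * (vnorm q * vnorm y)"
    by (simp add: algebra_simps)
  moreover have "0 \<le> vnorm p * vnorm x" "0 \<le> vnorm p * vnorm y"
    "0 \<le> vnorm q * vnorm x" "0 \<le> vnorm q * vnorm y"
    by simp_all
  ultimately have "1 + vnorm (p @ x @ q) + vnorm (p @ y @ q)
      \<le> (1 + 2 * vnorm p + 2 * vnorm q) * (1 + vnorm x + vnorm y)"
    using nx ny vnorm_nonneg[of p] vnorm_nonneg[of q] by linarith
  then have "(1 + vnorm (p @ x @ q) + vnorm (p @ y @ q))^m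
      \<le> ((1 + 2 * vnorm p + 2 * vnorm q) * (1 + vnorm x + vnorm y))^m"
    by (intro power_mono) (auto intro: add_nonneg_nonneg)
  then have "C * (1 + vnorm (p @ x @ q) + vnorm (p @ y @ q))^m * vdist x y
      \<le> C * ((1 + 2 * vnorm p + 2 * vnorm q) * (1 + vnorm x + vnorm y))^m * vdist x y"
    using C by (intro mult_right_mono mult_left_mono) auto
  moreover have "vdist (p @ x @ q) (p @ y @ q) = vdist x y"
    using x y by (simp add: vdist_append_left_cancel vdist_append_right_cancel)
  ultimately show "\<bar>f (p @ x @ q) - f (p @ y @ q)\<bar>
      \<le> C * (1 + 2 * vnorm p + 2 * vnorm q)^m * (1 + vnorm x + vnorm y)^m * vdist x y"
    using poly_lipD[OF f, of "p @ x @ q" "p @ y @ q"] x y p q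
    by (simp add: power_mult_distrib mult.assoc)
qed

lemma poly_lip_comp:
  assumes f: "poly_lip b f C m" and len: "\<And>x. length x = a \<Longrightarrow> length (T x) = b" and K: "0 \<le> K"
    and norm_T: "\<And>x. length x = a \<Longrightarrow> vnorm (T x) \<le> K * (1 + vnorm x)^p"
    and dist_T: "\<And>x y. length x = a \<Longrightarrow> length y = a \<Longrightarrow>
      vdist (T x) (T y) \<le> K * (1 + vnorm x + vnorm y)^q * vdist x y"
  shows "poly_lip a (\<lambda>x. f (T x)) (C * (1 + 2 * K)^m * K) (p * m + q)"
proof (rule poly_lipI)
  have C: "0 \<le> C"
    using poly_lip_nonneg[OF f] .
  then show "0 \<le> C * (1 + 2 * K)^m * K"
    using K by simp
  fix x y :: "real list"
  assume x: "length x = a" and y: "length y = a"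
  let ?s = "1 + vnorm x + vnorm y"
  have "K * (1 + vnorm x)^p \<le> K * ?s^p" "K * (1 + vnorm y)^p \<le> K * ?s^p" "1 \<le> ?s^p"
    using K by (auto intro!: mult_left_mono power_mono one_le_power)
  moreover have "(1 + 2 * K) * ?s^p = ?s^p + 2 * (K * ?s^p)"
    by (simp add: algebra_simps)
  ultimately have "1 + vnorm (T x) + vnorm (T y) \<le> (1 + 2 * K) * ?s^p"
    using norm_T[OF x] norm_T[OF y] by linarith
  then have "(1 + vnorm (T x) + vnorm (T y))^m \<le> ((1 + 2 * K) * ?s^p)^m"
    by (intro power_mono) (auto intro: add_nonneg_nonneg)
  then have "C * (1 + vnorm (T x) + vnorm (T y))^m * vdist (T x) (T y)
      \<le> C * ((1 + 2 * K) * ?s^p)^m * (K * ?s^q * vdist x y)"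
    using C dist_T[OF x y] K
    by (intro mult_mono mult_left_mono) (auto intro!: mult_nonneg_nonneg add_nonneg_nonneg)
  also have "\<dots> = C * (1 + 2 * K)^m * K * ?s^(p * m + q) * vdist x y"
    by (simp add: power_mult_distrib power_add flip: power_mult)
  finally show "\<bar>f (T x) - f (T y)\<bar> \<le> C * (1 + 2 * K)^m * K * ?s^(p * m + q) * vdist x y"
    using poly_lipD[OF f len[OF x] len[OF y]] by linarith
qed

lemma poly_lip_hd: "poly_lip 1 hd 1 0"
proof (rule poly_lipI)
  fix x y :: "real list"
  assume "length x = 1" "length y = 1"
  then obtain a b where "x = [a]" "y = [b]"
    by (metis One_nat_def length_0_conv length_Suc_conv)
  then show "\<bar>hd x - hd y\<bar> \<le> 1 * (1 + vnorm x + vnorm y)^0 * vdist x y"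
    by simp
qed simp

lemma abs_power_diff_le:
  fixes a b :: real
  assumes "0 \<le> a" "0 \<le> b"
  shows "\<bar>a^Suc j - b^Suc j\<bar> \<le> Suc j * (max a b)^j * \<bar>a - b\<bar>"
proof (induction j)
  case (Suc j)
  let ?M = "max a b"
  have "a^Suc (Suc j) - b^Suc (Suc j) = a * (a^Suc j - b^Suc j) + b^Suc j * (a - b)"
    by (simp add: algebra_simps)
  moreover have "\<bar>a * (a^Suc j - b^Suc j)\<bar> \<le> ?M * (Suc j * ?M^j * \<bar>a - b\<bar>)"
    using Suc assms by (simp add: abs_mult mult_mono)
  moreover have "\<bar>b^Suc j * (a - b)\<bar> \<le> ?M^Suc j * \<bar>a - b\<bar>"
    using assms by (simp add: abs_mult mult_right_mono power_mono del: power_Suc)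
  ultimately have "\<bar>a^Suc (Suc j) - b^Suc (Suc j)\<bar> \<le> ?M * (Suc j * ?M^j * \<bar>a - b\<bar>) + ?M^Suc j * \<bar>a - b\<bar>"
    by (smt (verit))
  then show ?case
    by (simp add: algebra_simps)
qed simp

lemma power_add_le: "0 \<le> a \<Longrightarrow> 0 \<le> (b::real) \<Longrightarrow> (a + b)^j \<le> 2^j * a^j + 2^j * b^j"
proof -
  assume a: "0 \<le> a" and b: "0 \<le> b"
  have "(a + b)^j \<le> (2 * max a b)^j"
    using a b by (intro power_mono) auto
  also have "\<dots> = 2^j * (max a b)^j"
    by (simp add: power_mult_distrib)
  also have "(max a b)^j \<le> a^j + b^j"
    using a b by (cases "a \<le> b") (auto simp: max_def)
  then have "2^j * (max a b)^j \<le> 2^j * (a^j + b^j)"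
    by simp
  finally show ?thesis
    by (simp add: algebra_simps)
qed

lemma poly_lip_affine_vnorm_power:
  assumes a: "0 \<le> a" and b: "0 \<le> b"
  obtains C m where "poly_lip k (\<lambda>x. (a + b * vnorm x)^j) C m"
proof (cases j)
  case 0
  then show ?thesis
    using that[of 0 0] by (simp add: poly_lip_def)
next
  case (Suc i)
  have "poly_lip k (\<lambda>x. (a + b * vnorm x)^Suc i) (Suc i * b * (a + b)^i) i"
  proof (rule poly_lipI)
    show "0 \<le> real (Suc i) * b * (a + b)^i"
      using a b by simp
    fix x y :: "real list"
    assume "length x = k" "length y = k"
    let ?u = "vnorm x" and ?v = "vnorm y"
    have M0: "0 \<le> max (a + b * ?u) (a + b * ?v)"
      using a b by (simp add: le_max_iff_disj)
    have "max (a + b * ?u) (a + b * ?v) \<le> (a + b) * (1 + ?u + ?v)"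
      using a b by (simp add: algebra_simps add_increasing mult_nonneg_nonneg)
    then have M: "(max (a + b * ?u) (a + b * ?v))^i \<le> (a + b)^i * (1 + ?u + ?v)^i"
      using M0 by (metis power_mult_distrib power_mono)
    have "\<bar>(a + b * ?u)^Suc i - (a + b * ?v)^Suc i\<bar>
        \<le> Suc i * (max (a + b * ?u) (a + b * ?v))^i * \<bar>(a + b * ?u) - (a + b * ?v)\<bar>"
      using a b by (intro abs_power_diff_le) auto
    also have "\<bar>(a + b * ?u) - (a + b * ?v)\<bar> \<le> b * vdist x y"
      using b abs_vnorm_diff_le[of x y] \<open>length x = k\<close> \<open>length y = k\<close>
      by (simp add: abs_mult mult_left_mono flip: right_diff_distrib)
    then have "Suc i * (max (a + b * ?u) (a + b * ?v))^i * \<bar>(a + b * ?u) - (a + b * ?v)\<bar>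
        \<le> Suc i * ((a + b)^i * (1 + ?u + ?v)^i) * (b * vdist x y)"
      using M M0 a b by (intro mult_mono mult_left_mono) auto
    finally show "\<bar>(a + b * ?u)^Suc i - (a + b * ?v)^Suc i\<bar>
        \<le> real (Suc i) * b * (a + b)^i * (1 + ?u + ?v)^i * vdist x y"
      by (simp add: ac_simps)
  qed
  then show ?thesis
    using that Suc by blast
qed

section \<open>Sublinear expectations\<close>

definition prob_family :: "'a measure set \<Rightarrow> bool" where
  "prob_family P \<longleftrightarrow> P \<noteq> {} \<and> (\<forall>Q\<in>P. prob_space Q)"

definition sE_integrable :: "'a measure set \<Rightarrow> ('a \<Rightarrow> real) \<Rightarrow> bool" where
  "sE_integrable P X \<longleftrightarrow> (\<forall>Q\<in>P. integrable Q X) \<and> bdd_above ((\<lambda>Q. integral\<^sup>L Q X) ` P)"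

lemma prob_family_singleton: "prob_space Q \<Longrightarrow> prob_family {Q}"
  by (simp add: prob_family_def)

lemma sE_singleton [simp]: "sE {Q} X = integral\<^sup>L Q X"
  by (simp add: sE_def)

lemma sE_integrable_singleton [simp]: "sE_integrable {Q} X \<longleftrightarrow> integrable Q X"
  by (simp add: sE_integrable_def)

lemma prob_space_integral_const: "prob_space Q \<Longrightarrow> integral\<^sup>L Q (\<lambda>_. c) = (c::real)"
  by (simp add: prob_space.prob_space)

lemma prob_space_integrable_const: "prob_space Q \<Longrightarrow> integrable Q (\<lambda>_. c::real)"
  by (simp add: prob_space.finite_measure finite_measure.integrable_const)

lemma sE_const:
  assumes "prob_family P"
  shows "sE P (\<lambda>_. c) = c"
proof -
  have "sE P (\<lambda>_. c) = (SUP Q\<in>P. c)"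
    unfolding sE_def using assms
    by (intro SUP_cong refl prob_space_integral_const) (auto simp: prob_family_def)
  then show ?thesis
    using assms by (simp add: prob_family_def)
qed

lemma sE_integrable_const:
  assumes "prob_family P"
  shows "sE_integrable P (\<lambda>_. c)"
proof -
  have "(\<lambda>Q. integral\<^sup>L Q (\<lambda>_. c)) ` P \<subseteq> {c}"
    using assms by (auto simp: prob_family_def prob_space_integral_const simp del: lebesgue_integral_const)
  then show ?thesis
    using assms bdd_above_mono[of "{c}"]
    by (auto simp: sE_integrable_def prob_family_def prob_space_integrable_const)
qed

lemma sE_le_add_scaled:
  assumes P: "prob_family P" and A: "sE_integrable P A" and B: "sE_integrable P B"
    and F: "sE_integrable P F" and c: "0 \<le> c"
    and le: "\<And>Q \<omega>. Q \<in> P \<Longrightarrow> \<omega> \<in> space Q \<Longrightarrow> A \<omega> \<le> B \<omega> + c * F \<omega>"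
  shows "sE P A \<le> sE P B + c * sE P F"
  unfolding sE_def
proof (rule cSUP_least)
  show "P \<noteq> {}"
    using P by (simp add: prob_family_def)
  fix Q
  assume Q: "Q \<in> P"
  have "integrable Q A" "integrable Q B" "integrable Q F"
    using A B F Q by (auto simp: sE_integrable_def)
  then have "integral\<^sup>L Q A \<le> integral\<^sup>L Q (\<lambda>\<omega>. B \<omega> + c * F \<omega>)"
    using le Q by (intro integral_mono) auto
  also have "\<dots> = integral\<^sup>L Q B + c * integral\<^sup>L Q F"
    using \<open>integrable Q B\<close> \<open>integrable Q F\<close> by simp
  also have "\<dots> \<le> (SUP Q\<in>P. integral\<^sup>L Q B) + c * (SUP Q\<in>P. integral\<^sup>L Q F)"
    using B F Q c unfolding sE_integrable_def by (intro add_mono mult_left_mono cSUP_upper) auto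
  finally show "integral\<^sup>L Q A \<le> (SUP Q\<in>P. integral\<^sup>L Q B) + c * (SUP Q\<in>P. integral\<^sup>L Q F)" .
qed

lemma sE_mono:
  assumes P: "prob_family P" and A: "sE_integrable P A" and B: "sE_integrable P B"
    and le: "\<And>Q \<omega>. Q \<in> P \<Longrightarrow> \<omega> \<in> space Q \<Longrightarrow> A \<omega> \<le> B \<omega>"
  shows "sE P A \<le> sE P B"
  using sE_le_add_scaled[OF P A B sE_integrable_const[OF P, of 0] order.refl] le sE_const[OF P]
  by simp

lemma sE_nonneg:
  assumes "prob_family P" "sE_integrable P X" "\<And>Q \<omega>. Q \<in> P \<Longrightarrow> \<omega> \<in> space Q \<Longrightarrow> 0 \<le> X \<omega>"
  shows "0 \<le> sE P X"
  using sE_mono[OF assms(1) sE_integrable_const[OF assms(1)] assms(2)] assms(3) sE_const[OF assms(1)]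
  by metis

lemma abs_sE_diff_le:
  assumes P: "prob_family P" and A: "sE_integrable P A" and B: "sE_integrable P B"
    and F: "sE_integrable P F" and c: "0 \<le> c"
    and le: "\<And>Q \<omega>. Q \<in> P \<Longrightarrow> \<omega> \<in> space Q \<Longrightarrow> \<bar>A \<omega> - B \<omega>\<bar> \<le> c * F \<omega>"
  shows "\<bar>sE P A - sE P B\<bar> \<le> c * sE P F"
proof -
  have "sE P A \<le> sE P B + c * sE P F"
    by (rule sE_le_add_scaled[OF P A B F c]) (use le in force)
  moreover have "sE P B \<le> sE P A + c * sE P F"
    by (rule sE_le_add_scaled[OF P B A F c]) (use le in force)
  ultimately show ?thesis
    by linarith
qed

lemma sE_integrable_add_const:
  assumes P: "prob_family P" and X: "sE_integrable P X"
  shows "sE_integrable P (\<lambda>\<omega>. X \<omega> + a)"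
proof -
  have "integrable Q (\<lambda>\<omega>. X \<omega> + a) \<and> integral\<^sup>L Q (\<lambda>\<omega>. X \<omega> + a) = integral\<^sup>L Q X + a"
    if "Q \<in> P" for Q
  proof -
    have "prob_space Q" "integrable Q X"
      using P X that by (auto simp: sE_integrable_def prob_family_def)
    then show ?thesis
      using prob_space_integrable_const[of Q a] prob_space_integral_const[of Q a] by simp
  qed
  moreover obtain U where "\<And>Q. Q \<in> P \<Longrightarrow> integral\<^sup>L Q X \<le> U"
    using X by (auto simp: sE_integrable_def bdd_above_def)
  ultimately show ?thesis
    unfolding sE_integrable_def bdd_above_def by (intro conjI exI[of _ "U + a"]) auto
qed

lemma sE_add_const:
  assumes P: "prob_family P" and X: "sE_integrable P X"
  shows "sE P (\<lambda>\<omega>. X \<omega> + a) = sE P X + a"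
proof -
  have "sE P (\<lambda>\<omega>. X \<omega> + a) \<le> sE P X + 1 * sE P (\<lambda>_. a)"
    by (rule sE_le_add_scaled[OF P sE_integrable_add_const[OF P X] X sE_integrable_const[OF P]]) auto
  moreover have "sE P X \<le> sE P (\<lambda>\<omega>. X \<omega> + a) + 1 * sE P (\<lambda>_. - a)"
    by (rule sE_le_add_scaled[OF P X sE_integrable_add_const[OF P X] sE_integrable_const[OF P]]) auto
  ultimately show ?thesis
    using sE_const[OF P] by simp
qed

lemma sublinear_space_prob_family: "sublinear_space M P H \<Longrightarrow> prob_family P"
  by (simp add: sublinear_space_def prob_family_def)

lemma sublinear_space_sE_integrable: "sublinear_space M P H \<Longrightarrow> X \<in> H \<Longrightarrow> sE_integrable P X"
  by (simp add: sublinear_space_def sE_integrable_def)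

lemma vals_append [simp]: "vals (Xs @ Ys) \<omega> = vals Xs \<omega> @ vals Ys \<omega>"
  by (simp add: vals_def)

lemma vals_Nil [simp]: "vals [] \<omega> = []"
  by (simp add: vals_def)

lemma vals_singleton [simp]: "vals [Y] \<omega> = [Y \<omega>]"
  by (simp add: vals_def)

lemma length_vals [simp]: "length (vals Xs \<omega>) = length Xs"
  by (simp add: vals_def)

lemma vals_take_Suc: "k < length Zs \<Longrightarrow> vals (take (Suc k) Zs) \<omega> = vals (take k Zs) \<omega> @ [(Zs ! k) \<omega>]"
  by (simp add: take_Suc_conv_app_nth)

lemma sublinear_space_poly_lip_comp:
  assumes "sublinear_space M P H" "set Xs \<subseteq> H" "poly_lip (length Xs) f C m"
  shows "(\<lambda>\<omega>. f (vals Xs \<omega>)) \<in> H"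
  using assms(1,2) poly_lip_imp_lLip[OF assms(3)] by (simp add: sublinear_space_def vals_def)

lemma sE_integrable_poly_lip_prefix:
  assumes ss: "sublinear_space M P H" and Xs: "set Xs \<subseteq> H"
    and f: "poly_lip (length c + length Xs) f C m"
  shows "sE_integrable P (\<lambda>\<omega>. f (c @ vals Xs \<omega>))"
proof -
  have c: "vals (map (\<lambda>a _. a) c) \<omega> = c" for \<omega>
    by (simp add: vals_def comp_def)
  have "set (map (\<lambda>a _. a) c @ Xs) \<subseteq> H"
    using Xs ss by (auto simp: sublinear_space_def)
  then have "(\<lambda>\<omega>. f (vals (map (\<lambda>a _. a) c @ Xs) \<omega>)) \<in> H"
    using f by (intro sublinear_space_poly_lip_comp[OF ss]) simp_all
  then show ?thesis
    using sublinear_space_sE_integrable[OF ss] by (simp add: c)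
qed

lemma sE_integrable_poly_lip:
  assumes "sublinear_space M P H" "set Xs \<subseteq> H" "poly_lip (length Xs) f C m"
  shows "sE_integrable P (\<lambda>\<omega>. f (vals Xs \<omega>))"
  using sE_integrable_poly_lip_prefix[OF assms(1,2), of "[]"] assms(3) by simp

lemma indep_of_Nil: "prob_family P \<Longrightarrow> indep_of P [] Y"
  by (simp add: indep_of_def sE_const)

lemma seq_indep_imp_indep_of_take:
  assumes "prob_family P" "seq_indep P Zs" "k < length Zs"
  shows "indep_of P (take k Zs) (Zs ! k)"
  using assms indep_of_Nil[OF assms(1)] by (cases "k = 0") (auto simp: seq_indep_def)

text \<open>Integrating out the last coordinate against any \<open>Y\<close> preserves the class; the weight
  \<open>(1 + |x@[t]| + |y@[t]|) \<le> (1 + |x| + |y|)(1 + 2|t|)\<close> factors out of the expectation.\<close>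

lemma poly_lip_sE_last:
  assumes P: "prob_family P" and f: "poly_lip (Suc k) f C m"
    and f_int: "\<And>c. length c = k \<Longrightarrow> sE_integrable P (\<lambda>\<omega>. f (c @ [Y \<omega>]))"
    and Y_int: "sE_integrable P (\<lambda>\<omega>. (1 + 2 * \<bar>Y \<omega>\<bar>)^m)"
  shows "poly_lip k (\<lambda>c. sE P (\<lambda>\<omega>. f (c @ [Y \<omega>]))) (C * sE P (\<lambda>\<omega>. (1 + 2 * \<bar>Y \<omega>\<bar>)^m)) m"
proof (rule poly_lipI)
  have C: "0 \<le> C"
    using poly_lip_nonneg[OF f] .
  then show "0 \<le> C * sE P (\<lambda>\<omega>. (1 + 2 * \<bar>Y \<omega>\<bar>)^m)"
    using sE_nonneg[OF P Y_int] by simp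
  fix x y :: "real list"
  assume x: "length x = k" and y: "length y = k"
  let ?c = "C * (1 + vnorm x + vnorm y)^m * vdist x y"
  have "\<bar>f (x @ [t]) - f (y @ [t])\<bar> \<le> ?c * (1 + 2 * \<bar>t\<bar>)^m" for t
  proof -
    have "vnorm (x @ [t]) \<le> vnorm x + \<bar>t\<bar>" "vnorm (y @ [t]) \<le> vnorm y + \<bar>t\<bar>"
      using vnorm_append_le[of x "[t]"] vnorm_append_le[of y "[t]"] by simp_all
    moreover have "0 \<le> vnorm x * \<bar>t\<bar>" "0 \<le> vnorm y * \<bar>t\<bar>"
      by simp_all
    moreover have "(1 + vnorm x + vnorm y) * (1 + 2 * \<bar>t\<bar>)
        = 1 + vnorm x + vnorm y + 2 * \<bar>t\<bar> + 2 * (vnorm x * \<bar>t\<bar>) + 2 * (vnorm y * \<bar>t\<bar>)"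
      by (simp add: algebra_simps)
    ultimately have "1 + vnorm (x @ [t]) + vnorm (y @ [t]) \<le> (1 + vnorm x + vnorm y) * (1 + 2 * \<bar>t\<bar>)"
      by linarith
    then have "(1 + vnorm (x @ [t]) + vnorm (y @ [t]))^m \<le> ((1 + vnorm x + vnorm y) * (1 + 2 * \<bar>t\<bar>))^m"
      by (intro power_mono) (auto intro: add_nonneg_nonneg)
    then have "C * (1 + vnorm (x @ [t]) + vnorm (y @ [t]))^m * vdist x y
        \<le> C * ((1 + vnorm x + vnorm y) * (1 + 2 * \<bar>t\<bar>))^m * vdist x y"
      using C by (intro mult_right_mono mult_left_mono) auto
    also have "\<dots> = ?c * (1 + 2 * \<bar>t\<bar>)^m"
      by (simp add: power_mult_distrib)
    finally show ?thesis
      using poly_lipD[OF f, of "x @ [t]" "y @ [t]"] x y by (simp add: vdist_append_right_cancel)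
  qed
  then have "\<bar>sE P (\<lambda>\<omega>. f (x @ [Y \<omega>])) - sE P (\<lambda>\<omega>. f (y @ [Y \<omega>]))\<bar>
      \<le> ?c * sE P (\<lambda>\<omega>. (1 + 2 * \<bar>Y \<omega>\<bar>)^m)"
    using C by (intro abs_sE_diff_le[OF P f_int[OF x] f_int[OF y] Y_int]) auto
  then show "\<bar>sE P (\<lambda>\<omega>. f (x @ [Y \<omega>])) - sE P (\<lambda>\<omega>. f (y @ [Y \<omega>]))\<bar>
      \<le> C * sE P (\<lambda>\<omega>. (1 + 2 * \<bar>Y \<omega>\<bar>)^m) * (1 + vnorm x + vnorm y)^m * vdist x y"
    by (simp add: ac_simps)
qed

section \<open>Measurability of continuous functions of finitely many random variables\<close>

definition list_continuous :: "nat \<Rightarrow> (real list \<Rightarrow> real) \<Rightarrow> bool" where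
  "list_continuous k F \<longleftrightarrow> (\<forall>x. length x = k \<longrightarrow>
     (\<forall>e>0. \<exists>d>0. \<forall>y. length y = k \<longrightarrow> vdist x y < d \<longrightarrow> \<bar>F y - F x\<bar> < e))"

lemma poly_lip_imp_list_continuous:
  assumes f: "poly_lip k F C m"
  shows "list_continuous k F"
  unfolding list_continuous_def
proof (intro allI impI)
  fix x :: "real list" and e :: real
  assume x: "length x = k" and e: "0 < e"
  define A where "A = C * (2 + 2 * vnorm x)^m"
  have A: "0 \<le> A"
    using poly_lip_nonneg[OF f] by (simp add: A_def)
  define d where "d = min 1 (e / (A + 1))"
  have "\<bar>F y - F x\<bar> < e" if y: "length y = k" and xy: "vdist x y < d" for y
  proof -
    have "vnorm y \<le> vnorm x + 1"
      using abs_vnorm_diff_le[of x y] x y xy by (simp add: d_def abs_le_iff)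
    then have "\<bar>F y - F x\<bar> \<le> A * vdist x y"
      using poly_lipD[OF f y x] poly_lip_nonneg[OF f] vdist_commute[of x y] x y
      by (simp add: A_def) (smt (verit, best) mult_right_mono mult_left_mono power_mono vnorm_nonneg vdist_nonneg)
    also have "\<dots> \<le> A * (e / (A + 1))"
      using A xy by (intro mult_left_mono) (auto simp: d_def)
    also have "\<dots> < e"
      using A e by (simp add: field_simps)
    finally show ?thesis .
  qed
  then show "\<exists>d>0. \<forall>y. length y = k \<longrightarrow> vdist x y < d \<longrightarrow> \<bar>F y - F x\<bar> < e"
    using A e by (intro exI[of _ d]) (auto simp: d_def)
qed

lemma list_continuous_fix_last: "list_continuous (Suc k) F \<Longrightarrow> list_continuous k (\<lambda>x. F (x @ [a]))"
  unfolding list_continuous_def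
  by (metis length_append_singleton vdist_append_right_cancel)

lemma abs_floor_grid_diff_le: "\<bar>\<lfloor>y * real (Suc N)\<rfloor> / real (Suc N) - y\<bar> \<le> 1 / real (Suc N)"
proof -
  have "\<bar>\<lfloor>y * real (Suc N)\<rfloor> - y * real (Suc N)\<bar> \<le> 1"
    by linarith
  then have "\<bar>\<lfloor>y * real (Suc N)\<rfloor> - y * real (Suc N)\<bar> / real (Suc N) \<le> 1 / real (Suc N)"
    by (simp add: divide_right_mono)
  then show ?thesis
    by (simp add: field_simps flip: abs_divide)
qed

lemma list_continuous_grid_LIMSEQ:
  assumes F: "list_continuous (Suc k) F" and xs: "length xs = k"
  shows "(\<lambda>N. F (xs @ [\<lfloor>y * real (Suc N)\<rfloor> / real (Suc N)])) \<longlonglongrightarrow> F (xs @ [y])"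
proof (rule LIMSEQ_I)
  fix r :: real
  assume "0 < r"
  then obtain d where d: "0 < d"
    and close: "\<And>x. length x = Suc k \<Longrightarrow> vdist (xs @ [y]) x < d \<Longrightarrow> \<bar>F x - F (xs @ [y])\<bar> < r"
    using F xs unfolding list_continuous_def by (metis length_append_singleton)
  obtain N0 where N0: "inverse (real (Suc N0)) < d"
    using reals_Archimedean[OF d] by blast
  have "\<bar>F (xs @ [\<lfloor>y * real (Suc N)\<rfloor> / real (Suc N)]) - F (xs @ [y])\<bar> < r" if "N0 \<le> N" for N
  proof (rule close)
    have "\<bar>y - \<lfloor>y * real (Suc N)\<rfloor> / real (Suc N)\<bar> \<le> 1 / real (Suc N)"
      using abs_floor_grid_diff_le[of y N] by (simp add: abs_minus_commute)
    also have "\<dots> \<le> inverse (real (Suc N0))"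
      using that by (simp add: divide_inverse le_imp_inverse_le)
    finally show "vdist (xs @ [y]) (xs @ [\<lfloor>y * real (Suc N)\<rfloor> / real (Suc N)]) < d"
      using N0 by (simp add: vdist_append_left_cancel)
  qed (use xs in simp)
  then show "\<exists>N0. \<forall>N\<ge>N0. norm (F (xs @ [\<lfloor>y * real (Suc N)\<rfloor> / real (Suc N)]) - F (xs @ [y])) < r"
    by auto
qed

text \<open>The last argument is replaced by the countably-valued \<open>\<lfloor>y (N+1)\<rfloor> / (N+1)\<close>, for which
  measurability reduces to the induction hypothesis; continuity passes to the limit \<open>N \<rightarrow> \<infinity>\<close>.\<close>

lemma borel_measurable_list_continuous:
  assumes "list_continuous k F" and "\<And>i. i < k \<Longrightarrow> g i \<in> borel_measurable M"
  shows "(\<lambda>\<omega>. F (map (\<lambda>i. g i \<omega>) [0..<k])) \<in> borel_measurable M"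
  using assms
proof (induction k arbitrary: F)
  case (Suc k)
  define u where "u N \<omega> = F (map (\<lambda>i. g i \<omega>) [0..<k] @ [\<lfloor>g k \<omega> * real (Suc N)\<rfloor> / real (Suc N)])"
    for N \<omega>
  have u_meas: "u N \<in> borel_measurable M" for N
  proof -
    have "(\<lambda>\<omega>. F (map (\<lambda>i. g i \<omega>) [0..<k] @ [q / Suc N])) \<in> borel_measurable M" for q :: int
      using Suc.IH[OF list_continuous_fix_last[OF Suc.prems(1)]] Suc.prems(2) by simp
    moreover have "(\<lambda>\<omega>. \<lfloor>g k \<omega> * Suc N\<rfloor>) \<in> measurable M (count_space UNIV)"
      using Suc.prems(2)[of k] by measurable
    ultimately show ?thesis
      unfolding u_def
      by (rule measurable_compose_countable[where f="\<lambda>q \<omega>. F (map (\<lambda>i. g i \<omega>) [0..<k] @ [q / Suc N])"])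
  qed
  have u_lim: "(\<lambda>N. u N \<omega>) \<longlonglongrightarrow> F (map (\<lambda>i. g i \<omega>) [0..<Suc k])" for \<omega>
    using list_continuous_grid_LIMSEQ[OF Suc.prems(1), of "map (\<lambda>i. g i \<omega>) [0..<k]" "g k \<omega>"]
    by (simp add: u_def)
  show ?case
    by (rule borel_measurable_LIMSEQ_real[where u=u]) (use u_meas u_lim in auto)
qed simp

lemma borel_measurable_poly_lip:
  "poly_lip k F C m \<Longrightarrow> (\<And>i. i < k \<Longrightarrow> g i \<in> borel_measurable M) \<Longrightarrow>
     (\<lambda>\<omega>. F (map (\<lambda>i. g i \<omega>) [0..<k])) \<in> borel_measurable M"
  using borel_measurable_list_continuous poly_lip_imp_list_continuous by blast

section \<open>Independence tested on functions of polynomial growth\<close>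

definition clip :: "real \<Rightarrow> real list \<Rightarrow> real list" where
  "clip R x = map (\<lambda>t. max (- R) (min R t)) x"

lemma length_clip [simp]: "length (clip R x) = length x"
  by (simp add: clip_def)

lemma abs_clip_coord_le:
  fixes a b R :: real
  shows "\<bar>max (- R) (min R a) - max (- R) (min R b)\<bar> \<le> \<bar>a - b\<bar>"
    and "0 \<le> R \<Longrightarrow> \<bar>max (- R) (min R a)\<bar> \<le> \<bar>a\<bar>"
    and "0 \<le> R \<Longrightarrow> \<bar>a - max (- R) (min R a)\<bar> \<le> \<bar>a\<bar>"
  by auto

lemma vdist_le_coordwise:
  assumes len: "length x' = length x" "length y' = length x" "length y = length x"
    and le: "\<And>i. i < length x \<Longrightarrow> \<bar>x' ! i - y' ! i\<bar> \<le> \<bar>x ! i - y ! i\<bar>"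
  shows "vdist x' y' \<le> vdist x y"
proof -
  have "(\<Sum>i<length x. (x' ! i - y' ! i)^2) \<le> (\<Sum>i<length x. (x ! i - y ! i)^2)"
  proof (rule sum_mono)
    fix i
    assume "i \<in> {..<length x}"
    then show "(x' ! i - y' ! i)^2 \<le> (x ! i - y ! i)^2"
      using le[of i, unfolded abs_le_square_iff] by simp
  qed
  then have "(vdist x' y')^2 \<le> (vdist x y)^2"
    using len by (simp add: vdist_power2)
  then show ?thesis
    by (rule power2_le_imp_le) simp
qed

lemma vdist_clip_le: "length x = length y \<Longrightarrow> vdist (clip R x) (clip R y) \<le> vdist x y"
  by (rule vdist_le_coordwise) (auto simp: clip_def abs_clip_coord_le(1))

lemma vnorm_clip_le:
  assumes "0 \<le> R"
  shows "vnorm (clip R x) \<le> vnorm x"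
proof -
  have "vdist (clip R x) (replicate (length x) 0) \<le> vdist x (replicate (length x) 0)"
    using assms by (intro vdist_le_coordwise) (auto simp: clip_def abs_clip_coord_le(2))
  then show ?thesis
    using vdist_replicate_0[of "clip R x"] vdist_replicate_0[of x] by simp
qed

lemma vdist_clip_self_le:
  assumes "0 \<le> R"
  shows "vdist x (clip R x) \<le> vnorm x"
proof -
  have "vdist x (clip R x) \<le> vdist x (replicate (length x) 0)"
    using assms by (intro vdist_le_coordwise) (auto simp: clip_def abs_clip_coord_le(3))
  then show ?thesis
    using vdist_replicate_0[of x] by simp
qed

lemma vnorm_clip_le_length:
  assumes "0 \<le> R"
  shows "vnorm (clip R x) \<le> real (length x) * R"
proof -
  have "(\<Sum>t\<leftarrow>x. \<bar>max (- R) (min R t)\<bar>) \<le> (\<Sum>t\<leftarrow>x. R)"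
    using assms by (intro sum_list_mono) auto
  then show ?thesis
    using vnorm_le_sum_list_abs[of "clip R x"] by (simp add: clip_def sum_list_triv o_def)
qed

lemma clip_eq_self:
  assumes "vnorm x \<le> R"
  shows "clip R x = x"
  unfolding clip_def
proof (rule map_idI)
  fix t
  assume "t \<in> set x"
  then have "\<bar>t\<bar> \<le> R"
    using abs_nth_le_vnorm[of _ x] assms by (metis in_set_conv_nth order_trans)
  then show "max (- R) (min R t) = t"
    by auto
qed

lemma poly_lip_clip:
  assumes f: "poly_lip k f C m" and R: "0 \<le> R"
  shows "poly_lip k (\<lambda>x. f (clip R x)) (C * (1 + 2 * (real k * R))^m) 0"
proof (rule poly_lipI)
  show "0 \<le> C * (1 + 2 * (real k * R))^m"
    using poly_lip_nonneg[OF f] R by simp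
  fix x y :: "real list"
  assume x: "length x = k" and y: "length y = k"
  have "\<bar>f (clip R x) - f (clip R y)\<bar>
      \<le> C * (1 + vnorm (clip R x) + vnorm (clip R y))^m * vdist (clip R x) (clip R y)"
    using poly_lipD[OF f] x y by simp
  also have "\<dots> \<le> C * (1 + 2 * (real k * R))^m * vdist x y"
    using vnorm_clip_le_length[OF R, of x] vnorm_clip_le_length[OF R, of y] vdist_clip_le[of x y]
      poly_lip_nonneg[OF f] x y R
    by (intro mult_mono mult_left_mono power_mono) auto
  finally show "\<bar>f (clip R x) - f (clip R y)\<bar> \<le> C * (1 + 2 * (real k * R))^m * (1 + vnorm x + vnorm y)^0 * vdist x y"
    by simp
qed

lemma bLip_clip:
  assumes f: "poly_lip k f C m" and R: "0 \<le> R"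
  shows "bLip k (\<lambda>x. f (clip R x))"
  unfolding bLip_def
proof (intro conjI)
  have "\<bar>f (clip R x)\<bar> \<le> (\<bar>f (replicate k 0)\<bar> + C) * (1 + real k * R)^Suc m" if "length x = k" for x
  proof -
    have "\<bar>f (clip R x)\<bar> \<le> (\<bar>f (replicate k 0)\<bar> + C) * (1 + vnorm (clip R x))^Suc m"
      using poly_lip_abs_le[OF f] that by simp
    also have "\<dots> \<le> (\<bar>f (replicate k 0)\<bar> + C) * (1 + real k * R)^Suc m"
      using vnorm_clip_le_length[OF R, of x] poly_lip_nonneg[OF f] that
      by (intro mult_left_mono power_mono) auto
    finally show ?thesis .
  qed
  then show "\<exists>B. \<forall>x. length x = k \<longrightarrow> \<bar>f (clip R x)\<bar> \<le> B"
    by blast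
  show "\<exists>L. \<forall>x y. length x = k \<longrightarrow> length y = k \<longrightarrow> \<bar>f (clip R x) - f (clip R y)\<bar> \<le> L * vdist x y"
    using poly_lipD[OF poly_lip_clip[OF f R]] by (intro exI[of _ "C * (1 + 2 * (real k * R))^m"]) simp
qed

lemma abs_clip_diff_le:
  assumes f: "poly_lip k f C m" and R: "1 \<le> R" and x: "length x = k"
  shows "\<bar>f x - f (clip R x)\<bar> \<le> (C * 3^m / R) * vnorm x ^ (m + 2)"
proof (cases "vnorm x \<le> R")
  case True
  then show ?thesis
    using R poly_lip_nonneg[OF f] by (simp add: clip_eq_self)
next
  case False
  let ?n = "vnorm x"
  have C: "0 \<le> C"
    using poly_lip_nonneg[OF f] .
  have n: "1 \<le> ?n" "1 \<le> ?n / R"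
    using False R by auto
  have "\<bar>f x - f (clip R x)\<bar> \<le> C * (1 + ?n + vnorm (clip R x))^m * vdist x (clip R x)"
    using poly_lipD[OF f] x by simp
  also have "\<dots> \<le> C * (3 * ?n)^m * ?n"
    using vnorm_clip_le[of R x] vdist_clip_self_le[of R x] n C R
    by (intro mult_mono mult_left_mono power_mono) auto
  also have "\<dots> = C * 3^m * ?n^(m + 1) * 1"
    by (simp add: power_mult_distrib)
  also have "\<dots> \<le> C * 3^m * ?n^(m + 1) * (?n / R)"
    using n C by (intro mult_left_mono) auto
  also have "\<dots> = (C * 3^m / R) * ?n^(m + 2)"
    by (simp add: field_simps)
  finally show ?thesis .
qed

lemma eq_if_abs_diff_le_inverse:
  fixes a b A :: real
  assumes "\<And>R. 1 \<le> R \<Longrightarrow> \<bar>a - b\<bar> \<le> A / R"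
  shows "a = b"
proof (rule ccontr)
  assume "a \<noteq> b"
  define R where "R = max 1 ((\<bar>A\<bar> + 1) / \<bar>a - b\<bar>)"
  have R: "1 \<le> R" "(\<bar>A\<bar> + 1) / \<bar>a - b\<bar> \<le> R"
    by (simp_all add: R_def)
  then have "\<bar>A\<bar> + 1 \<le> R * \<bar>a - b\<bar>"
    using \<open>a \<noteq> b\<close> by (simp add: field_simps)
  moreover have "\<bar>a - b\<bar> * R \<le> A"
    using assms[OF R(1)] R(1) by (simp add: field_simps)
  ultimately show False
    by (simp add: algebra_simps)
qed

lemma sE_integrable_vnorm_power:
  assumes ss: "sublinear_space M P H" and Zs: "set Zs \<subseteq> H" and ab: "0 \<le> a" "0 \<le> b"
  shows "sE_integrable P (\<lambda>\<omega>. (a + b * vnorm (c @ vals Zs \<omega>))^j)"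
proof -
  obtain C m where "poly_lip (length c + length Zs) (\<lambda>x. (a + b * vnorm x)^j) C m"
    using poly_lip_affine_vnorm_power[OF ab] by blast
  then show ?thesis
    by (rule sE_integrable_poly_lip_prefix[OF ss Zs])
qed

lemma sE_clip_error:
  assumes ss: "sublinear_space M P H" and Zs: "set Zs \<subseteq> H"
    and f: "poly_lip (length c + length Zs) f C m" and R: "1 \<le> R"
  shows "\<bar>sE P (\<lambda>\<omega>. f (c @ vals Zs \<omega>)) - sE P (\<lambda>\<omega>. f (clip R (c @ vals Zs \<omega>)))\<bar>
    \<le> (C * 3^m / R) * sE P (\<lambda>\<omega>. vnorm (c @ vals Zs \<omega>) ^ (m + 2))"
proof (rule abs_sE_diff_le[OF sublinear_space_prob_family[OF ss]])
  show "sE_integrable P (\<lambda>\<omega>. f (c @ vals Zs \<omega>))"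
    by (rule sE_integrable_poly_lip_prefix[OF ss Zs f])
  have "poly_lip (length c + length Zs) (\<lambda>x. f (clip R x))
      (C * (1 + 2 * (real (length c + length Zs) * R))^m) 0"
    using poly_lip_clip[OF f] R by simp
  then show "sE_integrable P (\<lambda>\<omega>. f (clip R (c @ vals Zs \<omega>)))"
    by (rule sE_integrable_poly_lip_prefix[OF ss Zs])
  show "sE_integrable P (\<lambda>\<omega>. vnorm (c @ vals Zs \<omega>) ^ (m + 2))"
    using sE_integrable_vnorm_power[OF ss Zs, of 0 1 c "m + 2"] by simp
  show "0 \<le> C * 3^m / R"
    using poly_lip_nonneg[OF f] R by simp
  show "\<bar>f (c @ vals Zs \<omega>) - f (clip R (c @ vals Zs \<omega>))\<bar> \<le> C * 3^m / R * vnorm (c @ vals Zs \<omega>) ^ (m + 2)"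
    for \<omega>
    using abs_clip_diff_le[OF f R] by simp
qed

lemma sE_last_clip_error:
  assumes ss: "sublinear_space M P H" and Y: "Y \<in> H"
    and f: "poly_lip (Suc k) f C m" and R: "1 \<le> R" and c: "length c = k"
  shows "\<bar>sE P (\<lambda>\<omega>. f (c @ [Y \<omega>])) - sE P (\<lambda>\<omega>. f (clip R (c @ [Y \<omega>])))\<bar>
    \<le> (C * 3^m * 2^(m + 2) / R) * (vnorm c ^ (m + 2) + sE P (\<lambda>\<omega>. \<bar>Y \<omega>\<bar>^(m + 2)))"
proof -
  let ?j = "m + 2"
  have P: "prob_family P"
    using sublinear_space_prob_family[OF ss] .
  have "sE P (\<lambda>\<omega>. vnorm (c @ [Y \<omega>]) ^ ?j)
      \<le> sE P (\<lambda>_. 2^?j * vnorm c ^ ?j) + 2^?j * sE P (\<lambda>\<omega>. \<bar>Y \<omega>\<bar>^?j)"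
  proof (rule sE_le_add_scaled[OF P _ sE_integrable_const[OF P]])
    show "sE_integrable P (\<lambda>\<omega>. vnorm (c @ [Y \<omega>]) ^ ?j)"
      using sE_integrable_vnorm_power[OF ss, of "[Y]" 0 1 c ?j] Y by simp
    show "sE_integrable P (\<lambda>\<omega>. \<bar>Y \<omega>\<bar>^?j)"
      using sE_integrable_vnorm_power[OF ss, of "[Y]" 0 1 "[]" ?j] Y by simp
    show "vnorm (c @ [Y \<omega>]) ^ ?j \<le> 2^?j * vnorm c ^ ?j + 2^?j * \<bar>Y \<omega>\<bar>^?j" for \<omega>
      using vnorm_append_le[of c "[Y \<omega>]"] power_add_le[of "vnorm c" "\<bar>Y \<omega>\<bar>" ?j]
        power_mono[of "vnorm (c @ [Y \<omega>])" "vnorm c + \<bar>Y \<omega>\<bar>" ?j]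
      by simp
  qed simp
  then have "(C * 3^m / R) * sE P (\<lambda>\<omega>. vnorm (c @ [Y \<omega>]) ^ ?j)
      \<le> (C * 3^m / R) * (2^?j * vnorm c ^ ?j + 2^?j * sE P (\<lambda>\<omega>. \<bar>Y \<omega>\<bar>^?j))"
    using poly_lip_nonneg[OF f] R sE_const[OF P] by (intro mult_left_mono) auto
  moreover have "\<bar>sE P (\<lambda>\<omega>. f (c @ [Y \<omega>])) - sE P (\<lambda>\<omega>. f (clip R (c @ [Y \<omega>])))\<bar>
      \<le> (C * 3^m / R) * sE P (\<lambda>\<omega>. vnorm (c @ [Y \<omega>]) ^ ?j)"
    using sE_clip_error[OF ss, of "[Y]" c f C m R] Y f R c by simp
  ultimately show ?thesis
    by (simp add: algebra_simps)
qed

lemma poly_lip_sE_last_sublinear: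
  assumes ss: "sublinear_space M P H" and Y: "Y \<in> H" and f: "poly_lip (Suc k) f C m"
  obtains C' where "poly_lip k (\<lambda>c. sE P (\<lambda>\<omega>. f (c @ [Y \<omega>]))) C' m"
proof -
  have "poly_lip k (\<lambda>c. sE P (\<lambda>\<omega>. f (c @ [Y \<omega>]))) (C * sE P (\<lambda>\<omega>. (1 + 2 * \<bar>Y \<omega>\<bar>)^m)) m"
  proof (rule poly_lip_sE_last[OF sublinear_space_prob_family[OF ss] f])
    show "sE_integrable P (\<lambda>\<omega>. f (c @ [Y \<omega>]))" if "length c = k" for c
      using sE_integrable_poly_lip_prefix[OF ss, of "[Y]" c f C m] Y f that by simp
    show "sE_integrable P (\<lambda>\<omega>. (1 + 2 * \<bar>Y \<omega>\<bar>)^m)"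
      using sE_integrable_vnorm_power[OF ss, of "[Y]" 1 2 "[]" m] Y by simp
  qed
  then show ?thesis
    using that by blast
qed

lemma sE_integrable_sE_last:
  assumes ss: "sublinear_space M P H" and Xs: "set Xs \<subseteq> H" and Y: "Y \<in> H"
    and g: "poly_lip (Suc (length Xs)) g C m"
  shows "sE_integrable P (\<lambda>\<omega>. sE P (\<lambda>\<omega>'. g (vals Xs \<omega> @ [Y \<omega>'])))"
proof -
  obtain C' where "poly_lip (length Xs) (\<lambda>c. sE P (\<lambda>\<omega>'. g (c @ [Y \<omega>']))) C' m"
    using poly_lip_sE_last_sublinear[OF ss Y g] by blast
  from sE_integrable_poly_lip[OF ss Xs this] show ?thesis
    by simp
qed

text \<open>\<^const>\<open>indep_of\<close> only tests bounded Lipschitz functions.  Clipping the arguments at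
  level \<open>R\<close> turns a function of polynomial growth into such a test function, at a cost of order
  \<open>1/R\<close> on both sides of the defining identity; letting \<open>R \<rightarrow> \<infinity>\<close> gives the identity itself.\<close>

lemma indep_of_poly_lip:
  assumes ss: "sublinear_space M P H" and Xs: "set Xs \<subseteq> H" and Y: "Y \<in> H"
    and ind: "indep_of P Xs Y" and f: "poly_lip (Suc (length Xs)) f C m"
  shows "sE P (\<lambda>\<omega>. f (vals Xs \<omega> @ [Y \<omega>])) = sE P (\<lambda>\<omega>. sE P (\<lambda>\<omega>'. f (vals Xs \<omega> @ [Y \<omega>'])))"
proof -
  let ?j = "m + 2" and ?K = "C * 3^m"
  have P: "prob_family P"
    using sublinear_space_prob_family[OF ss] .
  define h where "h R c = sE P (\<lambda>\<omega>. f (clip R (c @ [Y \<omega>])))" for R c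
  define S where "S = sE P (\<lambda>\<omega>. \<bar>Y \<omega>\<bar>^?j)"
  define NX where "NX = sE P (\<lambda>\<omega>. vnorm (vals Xs \<omega>) ^ ?j)"
  define NZ where "NZ = sE P (\<lambda>\<omega>. vnorm (vals Xs \<omega> @ [Y \<omega>]) ^ ?j)"
  have outer: "\<bar>sE P (\<lambda>\<omega>. f (vals Xs \<omega> @ [Y \<omega>])) - sE P (\<lambda>\<omega>. f (clip R (vals Xs \<omega> @ [Y \<omega>])))\<bar>
      \<le> ?K / R * NZ" if "1 \<le> R" for R
    using sE_clip_error[OF ss, of "Xs @ [Y]" "[]" f C m R] Xs Y f that by (simp add: NZ_def)
  have inner: "\<bar>sE P (\<lambda>\<omega>. sE P (\<lambda>\<omega>'. f (vals Xs \<omega> @ [Y \<omega>']))) - sE P (\<lambda>\<omega>. h R (vals Xs \<omega>))\<bar>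
      \<le> ?K * 2^?j / R * (sE P (\<lambda>\<omega>. vnorm (vals Xs \<omega>) ^ ?j + S))" if R: "1 \<le> R" for R
  proof (rule abs_sE_diff_le[OF P sE_integrable_sE_last[OF ss Xs Y f]])
    show "sE_integrable P (\<lambda>\<omega>. h R (vals Xs \<omega>))"
      unfolding h_def using R by (intro sE_integrable_sE_last[OF ss Xs Y poly_lip_clip[OF f]]) simp
    show "sE_integrable P (\<lambda>\<omega>. vnorm (vals Xs \<omega>) ^ ?j + S)"
      using sE_integrable_add_const[OF P] sE_integrable_vnorm_power[OF ss Xs, of 0 1 "[]" ?j] by simp
    show "0 \<le> ?K * 2^?j / R"
      using poly_lip_nonneg[OF f] R by simp
    show "\<bar>sE P (\<lambda>\<omega>'. f (vals Xs \<omega> @ [Y \<omega>'])) - h R (vals Xs \<omega>)\<bar> \<le> ?K * 2^?j / R * (vnorm (vals Xs \<omega>) ^ ?j + S)"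
      for \<omega>
      using sE_last_clip_error[OF ss Y f R, of "vals Xs \<omega>"] by (simp add: h_def S_def)
  qed
  have clipped: "sE P (\<lambda>\<omega>. f (clip R (vals Xs \<omega> @ [Y \<omega>]))) = sE P (\<lambda>\<omega>. h R (vals Xs \<omega>))"
    if "0 \<le> R" for R
    using ind bLip_clip[OF f that] unfolding indep_of_def h_def by fastforce
  have "\<bar>sE P (\<lambda>\<omega>. f (vals Xs \<omega> @ [Y \<omega>])) - sE P (\<lambda>\<omega>. sE P (\<lambda>\<omega>'. f (vals Xs \<omega> @ [Y \<omega>'])))\<bar>
      \<le> (?K * NZ + ?K * 2^?j * (NX + S)) / R" if "1 \<le> R" for R
    using outer[OF that] inner[OF that] clipped[of R] that
      sE_add_const[OF P sE_integrable_vnorm_power[OF ss Xs, of 0 1 "[]" ?j]]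
    by (simp add: NX_def add_divide_distrib)
  then show ?thesis
    by (rule eq_if_abs_diff_le_inverse)
qed

lemma sE_seq_indep_backward:
  assumes ss: "sublinear_space M P H" and Zs: "set Zs \<subseteq> H" and ind: "seq_indep P Zs"
    and F_lip: "\<And>k. k \<le> length Zs \<Longrightarrow> \<exists>C m. poly_lip k (F k) C m"
    and F_step: "\<And>k c. k < length Zs \<Longrightarrow> length c = k \<Longrightarrow>
      sE P (\<lambda>\<omega>. F (Suc k) (c @ [(Zs ! k) \<omega>])) = F k c"
  shows "sE P (\<lambda>\<omega>. F (length Zs) (vals Zs \<omega>)) = F 0 []"
proof -
  have P: "prob_family P"
    using sublinear_space_prob_family[OF ss] .
  have "k \<le> length Zs \<Longrightarrow> sE P (\<lambda>\<omega>. F k (vals (take k Zs) \<omega>)) = F 0 []" for k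
  proof (induction k)
    case 0
    then show ?case
      using sE_const[OF P] by simp
  next
    case (Suc k)
    then have k: "k < length Zs"
      by simp
    obtain C m where "poly_lip (Suc k) (F (Suc k)) C m"
      using F_lip[OF Suc.prems] by blast
    moreover have "set (take k Zs) \<subseteq> H" "Zs ! k \<in> H"
      using Zs k set_take_subset[of k Zs] by auto
    ultimately have "sE P (\<lambda>\<omega>. F (Suc k) (vals (take k Zs) \<omega> @ [(Zs ! k) \<omega>]))
        = sE P (\<lambda>\<omega>. sE P (\<lambda>\<omega>'. F (Suc k) (vals (take k Zs) \<omega> @ [(Zs ! k) \<omega>'])))"
      using k by (intro indep_of_poly_lip[OF ss] seq_indep_imp_indep_of_take[OF P ind]) simp_all
    also have "\<dots> = sE P (\<lambda>\<omega>. F k (vals (take k Zs) \<omega>))"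
      using F_step[OF k] k by simp
    finally show ?case
      using Suc k by (simp add: vals_take_Suc)
  qed
  from this[of "length Zs"] show ?thesis
    by simp
qed

section \<open>Gaussian integrals\<close>

lemma prob_space_std_gauss: "prob_space std_gauss"
  unfolding std_gauss_def by (rule prob_space_normal_density) simp

lemma sets_std_gauss [simp, measurable_cong]: "sets std_gauss = sets borel"
  by (simp add: std_gauss_def)

lemma borel_measurable_std_gauss_iff [simp]: "f \<in> borel_measurable std_gauss \<longleftrightarrow> f \<in> borel_measurable borel"
  by (simp add: std_gauss_def)

lemma integrable_std_gauss_poly: "integrable std_gauss (\<lambda>t. (1 + \<bar>t\<bar>)^p)"
proof (rule Bochner_Integration.integrable_bound)
  show "integrable std_gauss (\<lambda>t. 2^p * 1^p + 2^p * \<bar>t\<bar>^p)"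
    using prob_space_integrable_const[OF prob_space_std_gauss]
    by (auto simp: std_gauss_def integrable_density integrable_std_normal_moment_abs)
  show "AE t in std_gauss. norm ((1 + \<bar>t\<bar>)^p) \<le> norm (2^p * 1^p + 2^p * \<bar>t\<bar>^p)"
    using power_add_le[of 1] by (intro AE_I2) auto
qed simp

lemma integrable_std_gauss_bound:
  assumes f: "f \<in> borel_measurable borel" and le: "\<And>t. \<bar>f t\<bar> \<le> K * (1 + \<bar>t\<bar>)^p"
  shows "integrable std_gauss f"
proof (rule Bochner_Integration.integrable_bound)
  show "integrable std_gauss (\<lambda>t. K * (1 + \<bar>t\<bar>)^p)"
    using integrable_std_gauss_poly by simp
  show "AE t in std_gauss. norm (f t) \<le> norm (K * (1 + \<bar>t\<bar>)^p)"
    using le by (intro AE_I2) (auto intro: order_trans abs_ge_self)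
qed (use f in simp)

lemma integral_std_gauss_reflect:
  fixes f :: "real \<Rightarrow> real"
  assumes "f \<in> borel_measurable std_gauss"
  shows "(\<integral>t. f (- t) \<partial>std_gauss) = (\<integral>t. f t \<partial>std_gauss)"
proof -
  have f: "f \<in> borel_measurable borel"
    using assms by simp
  have "(\<integral>t. f t \<partial>std_gauss) = (\<integral>t. std_normal_density t * f t \<partial>lborel)"
    unfolding std_gauss_def using f by (subst integral_density) auto
  also have "\<dots> = \<bar>-1\<bar> *\<^sub>R (\<integral>t. std_normal_density (0 + (-1) * t) * f (0 + (-1) * t) \<partial>lborel)"
    by (rule lborel_integral_real_affine) simp
  also have "\<dots> = (\<integral>t. std_normal_density t * f (- t) \<partial>lborel)"
    by (simp add: std_normal_density_def)
  also have "\<dots> = (\<integral>t. f (- t) \<partial>std_gauss)"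
    unfolding std_gauss_def using f by (subst integral_density) auto
  finally show ?thesis
    by simp
qed

text \<open>By symmetry of the Gaussian, \<open>\<psi>(a t)\<close> is dominated by the average of \<open>\<psi>(b t)\<close> and
  \<open>\<psi>(-b t)\<close> with weights \<open>(b \<plusminus> a) / 2b\<close>, and both have the same Gaussian integral.\<close>

lemma integral_std_gauss_convex_scale_mono:
  assumes cvx: "convex_on UNIV \<psi>" and int: "\<And>y. integrable std_gauss (\<lambda>t. \<psi> (y * t))"
    and ab: "0 \<le> a" "a \<le> b"
  shows "(\<integral>t. \<psi> (a * t) \<partial>std_gauss) \<le> (\<integral>t. \<psi> (b * t) \<partial>std_gauss)"
proof (cases "b = 0")
  case True
  then show ?thesis
    using ab by simp
next
  case False
  then have b: "0 < b"
    using ab by simp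
  define u where "u = (a + b) / (2 * b)"
  have u: "0 \<le> u" "u \<le> 1"
    using ab b by (auto simp: u_def field_simps)
  have "\<psi> (a * t) \<le> (1 - u) * \<psi> (- (b * t)) + u * \<psi> (b * t)" for t
  proof -
    have "(1 - u) *\<^sub>R (- (b * t)) + u *\<^sub>R (b * t) = a * t"
      using b by (simp add: u_def field_simps)
    then show ?thesis
      using convex_onD[OF cvx u, of "- (b * t)" "b * t"] by simp
  qed
  moreover have "integrable std_gauss (\<lambda>t. \<psi> (- (b * t)))"
    using int[of "- b"] by simp
  ultimately have "(\<integral>t. \<psi> (a * t) \<partial>std_gauss)
      \<le> (\<integral>t. (1 - u) * \<psi> (- (b * t)) + u * \<psi> (b * t) \<partial>std_gauss)"
    using int[of a] int[of b] by (intro integral_mono) auto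
  also have "\<dots> = (1 - u) * (\<integral>t. \<psi> (- (b * t)) \<partial>std_gauss) + u * (\<integral>t. \<psi> (b * t) \<partial>std_gauss)"
    using \<open>integrable std_gauss (\<lambda>t. \<psi> (- (b * t)))\<close> int[of b] by simp
  also have "(\<integral>t. \<psi> (- (b * t)) \<partial>std_gauss) = (\<integral>t. \<psi> (b * t) \<partial>std_gauss)"
    using integral_std_gauss_reflect[of "\<lambda>t. \<psi> (b * t)"] borel_measurable_integrable[OF int[of b]]
    by simp
  finally show ?thesis
    by (simp add: algebra_simps)
qed

section \<open>Iterated Gaussian integration\<close>

definition gauss_step :: "real \<Rightarrow> (real list \<Rightarrow> real) \<Rightarrow> real list \<Rightarrow> real" where
  "gauss_step s F c = (\<integral>t. F (c @ [s * t]) \<partial>std_gauss)"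

fun gauss_iter :: "real \<Rightarrow> (real list \<Rightarrow> real) \<Rightarrow> nat \<Rightarrow> real list \<Rightarrow> real" where
  "gauss_iter s F 0 = F"
| "gauss_iter s F (Suc j) = gauss_step s (gauss_iter s F j)"

lemma borel_measurable_gauss_last:
  assumes F: "poly_lip (Suc k) F C m" and c: "length c = k"
  shows "(\<lambda>t. F (c @ [s * t])) \<in> borel_measurable borel"
proof -
  have "poly_lip 1 (\<lambda>l. F (c @ l @ [])) (C * (1 + 2 * vnorm c + 2 * vnorm [])^m) m"
    using poly_lip_fix_coords[of k 1 0 F C m c "[]"] F c by simp
  from borel_measurable_poly_lip[OF this, of "\<lambda>_ t. s * t"] show ?thesis
    by simp
qed

lemma integrable_gauss_last:
  assumes F: "poly_lip (Suc k) F C m" and c: "length c = k"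
  shows "integrable std_gauss (\<lambda>t. F (c @ [s * t]))"
proof (rule integrable_std_gauss_bound[OF borel_measurable_gauss_last[OF F c]])
  fix t
  let ?K = "\<bar>F (replicate (Suc k) 0)\<bar> + C"
  have K: "0 \<le> ?K"
    using poly_lip_nonneg[OF F] by simp
  have "1 + vnorm (c @ [s * t]) \<le> 1 + vnorm c + \<bar>s\<bar> * \<bar>t\<bar>"
    using vnorm_append_le[of c "[s * t]"] by (simp add: abs_mult)
  also have "\<dots> \<le> (1 + vnorm c + \<bar>s\<bar>) * (1 + \<bar>t\<bar>)"
    by (simp add: algebra_simps)
  finally have "(1 + vnorm (c @ [s * t]))^Suc m \<le> (1 + vnorm c + \<bar>s\<bar>)^Suc m * (1 + \<bar>t\<bar>)^Suc m"
    by (metis power_mult_distrib power_mono add_nonneg_nonneg vnorm_nonneg zero_le_one)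
  then show "\<bar>F (c @ [s * t])\<bar> \<le> (?K * (1 + vnorm c + \<bar>s\<bar>)^Suc m) * (1 + \<bar>t\<bar>)^Suc m"
    using poly_lip_abs_le[OF F, of "c @ [s * t]"] c mult_left_mono[OF _ K] by (fastforce simp: mult.assoc)
qed

lemma poly_lip_gauss_step:
  assumes F: "poly_lip (Suc k) F C m"
  shows "poly_lip k (gauss_step s F) (C * (\<integral>t. (1 + 2 * \<bar>s * t\<bar>)^m \<partial>std_gauss)) m"
proof -
  have "integrable std_gauss (\<lambda>t. (1 + 2 * \<bar>s * t\<bar>)^m)"
  proof (rule integrable_std_gauss_bound)
    show "\<bar>(1 + 2 * \<bar>s * t\<bar>)^m\<bar> \<le> (1 + 2 * \<bar>s\<bar>)^m * (1 + \<bar>t\<bar>)^m" for t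
      by (simp add: abs_mult algebra_simps power_mult_distrib[symmetric] power_mono)
  qed simp
  then have "poly_lip k (\<lambda>c. sE {std_gauss} (\<lambda>t. F (c @ [s * t])))
      (C * sE {std_gauss} (\<lambda>t. (1 + 2 * \<bar>s * t\<bar>)^m)) m"
    using integrable_gauss_last[OF F]
    by (intro poly_lip_sE_last[OF prob_family_singleton[OF prob_space_std_gauss] F]) simp_all
  then show ?thesis
    by (simp add: gauss_step_def[abs_def])
qed

lemma poly_lip_gauss_iter:
  assumes "poly_lip (k + j) F C m"
  obtains C' m' where "poly_lip k (gauss_iter s F j) C' m'"
  using assms
proof (induction j arbitrary: k thesis)
  case (Suc j)
  obtain C' m' where "poly_lip (Suc k) (gauss_iter s F j) C' m'"
    using Suc.IH[of "Suc k"] Suc.prems(2) by auto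
  then show ?case
    using Suc.prems(1) poly_lip_gauss_step by fastforce
qed auto

lemma map2_convex_comb_same: "map2 (\<lambda>a b. u * a + (1 - u) * b) c c = (c :: real list)"
  by (induction c) (auto simp: algebra_simps)

lemma map2_convex_comb_append:
  "length x = length y \<Longrightarrow> map2 (\<lambda>a b. u * a + (1 - u) * b) (x @ [z]) (y @ [z'])
     = map2 (\<lambda>a b. u * a + (1 - u) * b) x y @ [u * z + (1 - u) * (z' :: real)]"
  by simp

lemma convex_gauss_step:
  assumes F: "poly_lip (Suc k) F C m" and cvx: "convex_fn (Suc k) F"
  shows "convex_fn k (gauss_step s F)"
  unfolding convex_fn_def
proof (intro allI impI)
  fix x y :: "real list" and u :: real
  assume x: "length x = k" and y: "length y = k" and u: "0 \<le> u" "u \<le> 1"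
  let ?z = "map2 (\<lambda>a b. u * a + (1 - u) * b) x y"
  have "F (?z @ [s * t]) \<le> u * F (x @ [s * t]) + (1 - u) * F (y @ [s * t])" for t
    using cvx[unfolded convex_fn_def, rule_format, of "x @ [s * t]" "y @ [s * t]" u] x y u
    by (simp add: map2_convex_comb_append algebra_simps)
  moreover have "length ?z = k"
    using x y by simp
  ultimately have "gauss_step s F ?z \<le> (\<integral>t. u * F (x @ [s * t]) + (1 - u) * F (y @ [s * t]) \<partial>std_gauss)"
    unfolding gauss_step_def using integrable_gauss_last[OF F] x y by (intro integral_mono) auto
  also have "\<dots> = u * gauss_step s F x + (1 - u) * gauss_step s F y"
    unfolding gauss_step_def using integrable_gauss_last[OF F] x y by simp
  finally show "gauss_step s F ?z \<le> u * gauss_step s F x + (1 - u) * gauss_step s F y" .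
qed

text \<open>Convex test functions are maximised by the largest volatility, concave ones by the smallest;
  \<open>b = True\<close> selects the convex case.\<close>

definition convex_or_concave :: "bool \<Rightarrow> nat \<Rightarrow> (real list \<Rightarrow> real) \<Rightarrow> bool" where
  "convex_or_concave b k F \<longleftrightarrow> (if b then convex_fn k F else concave_fn k F)"

definition extreme_scale :: "bool \<Rightarrow> real \<Rightarrow> real \<Rightarrow> real" where
  "extreme_scale b sl su = (if b then su else sl)"

lemma extreme_scale_in: "sl \<le> su \<Longrightarrow> extreme_scale b sl su \<in> {sl..su}"
  by (simp add: extreme_scale_def)

lemma convex_or_concave_gauss_iter:
  assumes F: "poly_lip (k + j) F C m" and cc: "convex_or_concave b (k + j) F"
  shows "convex_or_concave b k (gauss_iter s F j)"
  using assms
proof (induction j arbitrary: k)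
  case (Suc j)
  obtain C' m' where F': "poly_lip (Suc k) (gauss_iter s F j) C' m'"
    using poly_lip_gauss_iter[of "Suc k" j F C m s] Suc.prems(1) by auto
  have IH: "convex_or_concave b (Suc k) (gauss_iter s F j)"
    using Suc.IH[of "Suc k"] Suc.prems by simp
  show ?case
  proof (cases b)
    case True
    then show ?thesis
      using IH convex_gauss_step[OF F'] by (simp add: convex_or_concave_def)
  next
    case False
    then have "convex_fn (Suc k) (\<lambda>x. - gauss_iter s F j x)"
      using IH by (simp add: convex_or_concave_def concave_fn_def)
    then have "convex_fn k (gauss_step s (\<lambda>x. - gauss_iter s F j x))"
      by (rule convex_gauss_step[OF poly_lip_uminus[OF F']])
    then show ?thesis
      using False by (simp add: convex_or_concave_def concave_fn_def gauss_step_def[abs_def])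
  qed
qed simp

lemma convex_fn_imp_convex_on_last:
  assumes cvx: "convex_fn (Suc k) F" and c: "length c = k"
  shows "convex_on UNIV (\<lambda>y. F (c @ [y]))"
proof (rule convex_onI)
  fix t x y :: real
  assume "0 < t" "t < 1"
  have "map2 (\<lambda>a b. (1 - t) * a + (1 - (1 - t)) * b) (c @ [x]) (c @ [y]) = c @ [(1 - t) *\<^sub>R x + t *\<^sub>R y]"
    using map2_convex_comb_same[of "1 - t" c] by simp
  then show "F (c @ [(1 - t) *\<^sub>R x + t *\<^sub>R y]) \<le> (1 - t) * F (c @ [x]) + t * F (c @ [y])"
    using cvx[unfolded convex_fn_def, rule_format, of "c @ [x]" "c @ [y]" "1 - t"] c \<open>t < 1\<close> \<open>0 < t\<close>
    by simp
qed simp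

lemma gauss_step_le_extreme_scale:
  assumes F: "poly_lip (Suc k) F C m" and c: "length c = k" and cc: "convex_or_concave b (Suc k) F"
    and sl: "0 \<le> sl" and v: "v \<in> {sl..su}"
  shows "gauss_step v F c \<le> gauss_step (extreme_scale b sl su) F c"
proof (cases b)
  case True
  then have "convex_on UNIV (\<lambda>y. F (c @ [y]))"
    using cc c by (simp add: convex_or_concave_def convex_fn_imp_convex_on_last)
  then show ?thesis
    using True sl v integrable_gauss_last[OF F c]
    by (auto simp: gauss_step_def extreme_scale_def intro!: integral_std_gauss_convex_scale_mono)
next
  case False
  then have "convex_on UNIV (\<lambda>y. - F (c @ [y]))"
    using cc c convex_fn_imp_convex_on_last[of k "\<lambda>x. - F x"]
    by (simp add: convex_or_concave_def concave_fn_def)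
  then have "(\<integral>t. - F (c @ [sl * t]) \<partial>std_gauss) \<le> (\<integral>t. - F (c @ [v * t]) \<partial>std_gauss)"
    using sl v integrable_gauss_last[OF F c]
    by (intro integral_std_gauss_convex_scale_mono[where \<psi>="\<lambda>y. - F (c @ [y])"]) auto
  then show ?thesis
    using False by (simp add: gauss_step_def extreme_scale_def)
qed

lemma product_sigma_finite_std_gauss: "product_sigma_finite (\<lambda>_::nat. std_gauss)"
  unfolding product_sigma_finite_def using prob_space_imp_sigma_finite[OF prob_space_std_gauss] by simp

lemma prob_space_PiM_std_gauss: "prob_space (PiM I (\<lambda>_::nat. std_gauss))"
  by (rule prob_space_PiM) (rule prob_space_std_gauss)

lemma one_plus_sum_le_prod:
  fixes a :: "'a \<Rightarrow> real"
  assumes "finite I" and "\<And>i. i \<in> I \<Longrightarrow> 0 \<le> a i"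
  shows "1 + (\<Sum>i\<in>I. a i) \<le> (\<Prod>i\<in>I. 1 + a i)"
  using assms
proof (induction I rule: finite_induct)
  case (insert x I)
  have "1 + (\<Sum>i\<in>insert x I. a i) \<le> (1 + a x) * (1 + (\<Sum>i\<in>I. a i))"
    using insert by (simp add: algebra_simps sum_nonneg)
  also have "\<dots> \<le> (1 + a x) * (\<Prod>i\<in>I. 1 + a i)"
    using insert by (intro mult_left_mono) auto
  finally show ?case
    using insert by simp
qed simp

lemma one_plus_vnorm_scaled_le_prod:
  "1 + vnorm (c @ map (\<lambda>i. s * z i) [k..<n]) \<le> (1 + vnorm c + \<bar>s\<bar>) * (\<Prod>i\<in>{k..<n}. 1 + \<bar>z i\<bar>)"
proof -
  let ?l = "map (\<lambda>i. s * z i) [k..<n]" and ?S = "\<Sum>i\<in>{k..<n}. \<bar>z i\<bar>"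
  have "vnorm ?l \<le> (\<Sum>i\<in>{k..<n}. \<bar>s * z i\<bar>)"
    using vnorm_le_sum_list_abs[of ?l] sum_set_upt_conv_sum_list_nat[of "\<lambda>i. \<bar>s * z i\<bar>" k n]
    by (simp add: comp_def)
  then have "1 + vnorm (c @ ?l) \<le> 1 + vnorm c + \<bar>s\<bar> * ?S"
    using vnorm_append_le[of c ?l] by (simp add: abs_mult sum_distrib_left)
  also have "\<dots> \<le> (1 + vnorm c + \<bar>s\<bar>) * (1 + ?S)"
    by (simp add: algebra_simps sum_nonneg)
  also have "\<dots> \<le> (1 + vnorm c + \<bar>s\<bar>) * (\<Prod>i\<in>{k..<n}. 1 + \<bar>z i\<bar>)"
    by (intro mult_left_mono one_plus_sum_le_prod) auto
  finally show ?thesis .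
qed

lemma borel_measurable_PiM_gauss:
  assumes F: "poly_lip n F C m" and c: "length c = k" and kn: "k \<le> n"
  shows "(\<lambda>z. F (c @ map (\<lambda>i. s * z i) [k..<n])) \<in> borel_measurable (PiM {k..<n} (\<lambda>_::nat. std_gauss))"
proof -
  define g where "g i = (if i < k then (\<lambda>_. c ! i) else (\<lambda>z. s * z i))" for i
  have "g i \<in> borel_measurable (PiM {k..<n} (\<lambda>_::nat. std_gauss))" if "i < n" for i
  proof -
    have "(\<lambda>z. z i) \<in> borel_measurable (PiM {k..<n} (\<lambda>_::nat. std_gauss))" if "k \<le> i"
      using measurable_component_singleton[of i "{k..<n}" "\<lambda>_. std_gauss"] \<open>i < n\<close> that
      by (simp add: measurable_cong_sets[OF refl sets_std_gauss])
    then show ?thesis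
      by (auto simp: g_def)
  qed
  moreover have "map (\<lambda>i. g i z) [0..<n] = c @ map (\<lambda>i. s * z i) [k..<n]" for z
  proof -
    have "[0..<n] = [0..<k] @ [k..<n]"
      using kn by (metis le_add_diff_inverse upt_add_eq_append zero_le)
    moreover have "map (\<lambda>i. g i z) [0..<k] = c"
      using c by (intro nth_equalityI) (auto simp: g_def)
    ultimately show ?thesis
      by (auto simp: g_def)
  qed
  ultimately show ?thesis
    using borel_measurable_poly_lip[OF F, of g] by simp
qed

lemma integrable_PiM_gauss:
  assumes F: "poly_lip n F C m" and c: "length c = k" and kn: "k \<le> n"
  shows "integrable (PiM {k..<n} (\<lambda>_::nat. std_gauss)) (\<lambda>z. F (c @ map (\<lambda>i. s * z i) [k..<n]))"
proof -
  let ?K = "(\<bar>F (replicate n 0)\<bar> + C) * (1 + vnorm c + \<bar>s\<bar>)^Suc m"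
  have K: "0 \<le> \<bar>F (replicate n 0)\<bar> + C"
    using poly_lip_nonneg[OF F] by simp
  have "integrable (PiM {k..<n} (\<lambda>_::nat. std_gauss)) (\<lambda>z. \<Prod>i\<in>{k..<n}. (1 + \<bar>z i\<bar>)^Suc m)"
    by (rule product_sigma_finite.product_integrable_prod[OF product_sigma_finite_std_gauss])
      (simp, rule integrable_std_gauss_poly)
  then have int: "integrable (PiM {k..<n} (\<lambda>_::nat. std_gauss))
      (\<lambda>z. ?K * (\<Prod>i\<in>{k..<n}. (1 + \<bar>z i\<bar>)^Suc m))"
    by simp
  have bound: "\<bar>F (c @ map (\<lambda>i. s * z i) [k..<n])\<bar> \<le> ?K * (\<Prod>i\<in>{k..<n}. (1 + \<bar>z i\<bar>)^Suc m)" for z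
  proof -
    let ?l = "map (\<lambda>i. s * z i) [k..<n]"
    have "(1 + vnorm (c @ ?l))^Suc m \<le> ((1 + vnorm c + \<bar>s\<bar>) * (\<Prod>i\<in>{k..<n}. 1 + \<bar>z i\<bar>))^Suc m"
      by (intro power_mono one_plus_vnorm_scaled_le_prod) (auto intro: add_nonneg_nonneg)
    then have "(\<bar>F (replicate n 0)\<bar> + C) * (1 + vnorm (c @ ?l))^Suc m
        \<le> (\<bar>F (replicate n 0)\<bar> + C) * ((1 + vnorm c + \<bar>s\<bar>) * (\<Prod>i\<in>{k..<n}. 1 + \<bar>z i\<bar>))^Suc m"
      using K by (rule mult_left_mono)
    also have "\<dots> = ?K * (\<Prod>i\<in>{k..<n}. (1 + \<bar>z i\<bar>)^Suc m)"
      by (simp only: power_mult_distrib prod_power_distrib mult.assoc)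
    finally show ?thesis
      using poly_lip_abs_le[OF F, of "c @ ?l"] c kn by simp
  qed
  show ?thesis
  proof (rule Bochner_Integration.integrable_bound[OF int borel_measurable_PiM_gauss[OF F c kn]])
    show "AE z in PiM {k..<n} (\<lambda>_. std_gauss). norm (F (c @ map (\<lambda>i. s * z i) [k..<n]))
        \<le> norm (?K * (\<Prod>i\<in>{k..<n}. (1 + \<bar>z i\<bar>)^Suc m))"
    proof (rule AE_I2)
      fix z
      have "\<bar>F (c @ map (\<lambda>i. s * z i) [k..<n])\<bar> \<le> \<bar>?K * (\<Prod>i\<in>{k..<n}. (1 + \<bar>z i\<bar>)^Suc m)\<bar>"
        using bound[of z] abs_ge_self order_trans by blast
      then show "norm (F (c @ map (\<lambda>i. s * z i) [k..<n])) \<le> norm (?K * (\<Prod>i\<in>{k..<n}. (1 + \<bar>z i\<bar>)^Suc m))"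
        by (simp only: real_norm_def)
    qed
  qed
qed

lemma map_merge_upt:
  assumes "k < n"
  shows "map (\<lambda>i. s * merge {k} {Suc k..<n} (x, y) i) [k..<n] = s * x k # map (\<lambda>i. s * y i) [Suc k..<n]"
  using assms by (auto simp: upt_conv_Cons merge_def intro!: map_cong)

lemma gauss_iter_eq_integral_PiM:
  assumes F: "poly_lip n F C m"
  shows "k + j = n \<Longrightarrow> length c = k \<Longrightarrow>
    gauss_iter s F j c = (\<integral>z. F (c @ map (\<lambda>i. s * z i) [k..<n]) \<partial>PiM {k..<n} (\<lambda>_::nat. std_gauss))"
proof (induction j arbitrary: k c)
  case 0
  then show ?case
    using prob_space_integral_const[OF prob_space_PiM_std_gauss, of "{n..<n}" "F c"] by simp
next
  case (Suc j)
  let ?J = "{Suc k..<n}" and ?f = "\<lambda>z. F (c @ map (\<lambda>i. s * z i) [k..<n])"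
  have kn: "k < n" and Jk: "{k..<n} = {k} \<union> ?J"
    using Suc.prems by auto
  have "(\<integral>z. ?f z \<partial>PiM {k..<n} (\<lambda>_. std_gauss))
      = (\<integral>x. (\<integral>y. ?f (merge {k} ?J (x, y)) \<partial>PiM ?J (\<lambda>_. std_gauss)) \<partial>PiM {k} (\<lambda>_. std_gauss))"
    unfolding Jk using integrable_PiM_gauss[OF F Suc.prems(2), of s] kn Jk
    by (intro product_sigma_finite.product_integral_fold[OF product_sigma_finite_std_gauss]) auto
  also have "\<dots> = (\<integral>x. gauss_iter s F j (c @ [s * x k]) \<partial>PiM {k} (\<lambda>_. std_gauss))"
  proof (rule Bochner_Integration.integral_cong[OF refl])
    fix x :: "nat \<Rightarrow> real"
    show "(\<integral>y. ?f (merge {k} ?J (x, y)) \<partial>PiM ?J (\<lambda>_. std_gauss)) = gauss_iter s F j (c @ [s * x k])"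
      using Suc.IH[of "Suc k" "c @ [s * x k]"] Suc.prems by (simp add: map_merge_upt[OF kn])
  qed
  also have "\<dots> = (\<integral>t. gauss_iter s F j (c @ [s * t]) \<partial>std_gauss)"
  proof (rule product_sigma_finite.product_integral_singleton[OF product_sigma_finite_std_gauss])
    obtain C' m' where "poly_lip (Suc k) (gauss_iter s F j) C' m'"
      using poly_lip_gauss_iter[of "Suc k" j F C m s] F Suc.prems by auto
    from borel_measurable_gauss_last[OF this Suc.prems(2)]
    show "(\<lambda>t. gauss_iter s F j (c @ [s * t])) \<in> borel_measurable std_gauss"
      by simp
  qed
  finally show ?case
    by (simp add: gauss_step_def)
qed

lemma classical_E_eq_gauss_iter: "poly_lip n \<phi> C m \<Longrightarrow> classical_E n \<phi> s = gauss_iter s \<phi> n []"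
  using gauss_iter_eq_integral_PiM[of n \<phi> C m 0 n "[]" s] by (simp add: classical_E_def atLeast0LessThan)

section \<open>Products of scales and Gaussians\<close>

definition mult_halves :: "nat \<Rightarrow> (real list \<Rightarrow> real) \<Rightarrow> real list \<Rightarrow> real" where
  "mult_halves n \<phi> w = \<phi> (map (\<lambda>i. w ! i * w ! (n + i)) [0..<n])"

lemma sum_lessThan_add_self: "(\<Sum>i<n + n. f i) = (\<Sum>i<n. f i) + (\<Sum>i<n. f (n + i :: nat))"
proof -
  have "(\<Sum>i<n + n. f i) = (\<Sum>i\<in>{0..<n}. f i) + (\<Sum>i\<in>{n..<n + n}. f i)"
    by (simp add: sum.atLeastLessThan_concat atLeast0LessThan[symmetric])
  also have "(\<Sum>i\<in>{n..<n + n}. f i) = (\<Sum>i\<in>{0..<n}. f (i + n))"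
    using sum.shift_bounds_nat_ivl[of f 0 n n] by simp
  finally show ?thesis
    by (simp add: atLeast0LessThan add.commute)
qed

lemma mult_diff_power2_le:
  fixes a b a' b' M :: real
  assumes "\<bar>b\<bar> \<le> M" "\<bar>a'\<bar> \<le> M"
  shows "(a * b - a' * b')^2 \<le> 2 * M^2 * ((a - a')^2 + (b - b')^2)"
proof -
  have "a * b - a' * b' = (a - a') * b + a' * (b - b')"
    by (simp add: algebra_simps)
  then have "\<bar>a * b - a' * b'\<bar> \<le> \<bar>a - a'\<bar> * \<bar>b\<bar> + \<bar>a'\<bar> * \<bar>b - b'\<bar>"
    by (metis abs_mult abs_triangle_ineq)
  also have "\<dots> \<le> \<bar>a - a'\<bar> * M + M * \<bar>b - b'\<bar>"
    using assms by (intro add_mono mult_left_mono mult_right_mono) auto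
  finally have "(a * b - a' * b')^2 \<le> (M * (\<bar>a - a'\<bar> + \<bar>b - b'\<bar>))^2"
    by (metis abs_ge_zero power2_abs power_mono distrib_left mult.commute)
  also have "\<dots> = M^2 * (\<bar>a - a'\<bar> + \<bar>b - b'\<bar>)^2"
    by (simp add: power_mult_distrib)
  also have "(\<bar>a - a'\<bar> + \<bar>b - b'\<bar>)^2 \<le> 2 * ((a - a')^2 + (b - b')^2)"
    using zero_le_power2[of "\<bar>a - a'\<bar> - \<bar>b - b'\<bar>"] by (simp add: power2_eq_square algebra_simps)
  then have "M^2 * (\<bar>a - a'\<bar> + \<bar>b - b'\<bar>)^2 \<le> M^2 * (2 * ((a - a')^2 + (b - b')^2))"
    by (intro mult_left_mono) auto
  finally show ?thesis
    by (simp add: algebra_simps)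
qed

lemma vnorm_mult_halves_le:
  assumes w: "length w = n + n"
  shows "vnorm (map (\<lambda>i. w ! i * w ! (n + i)) [0..<n]) \<le> 2 * (1 + vnorm w)^2"
proof -
  let ?T = "map (\<lambda>i. w ! i * w ! (n + i)) [0..<n]"
  have "(vnorm ?T)^2 = (\<Sum>i<n. (w ! i * w ! (n + i))^2)"
    by (simp add: vnorm_power2)
  also have "\<dots> \<le> (\<Sum>i<n. (w ! i)^2 * (vnorm w)^2)"
  proof (rule sum_mono)
    fix i
    assume "i \<in> {..<n}"
    then have "\<bar>w ! (n + i)\<bar> \<le> vnorm w"
      using w by (intro abs_nth_le_vnorm) auto
    then have "(w ! (n + i))^2 \<le> (vnorm w)^2"
      by (metis abs_ge_zero power2_abs power_mono)
    then show "(w ! i * w ! (n + i))^2 \<le> (w ! i)^2 * (vnorm w)^2"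
      by (simp add: power_mult_distrib mult_left_mono)
  qed
  also have "\<dots> = (\<Sum>i<n. (w ! i)^2) * (vnorm w)^2"
    by (simp add: sum_distrib_right)
  also have "(\<Sum>i<n. (w ! i)^2) \<le> (vnorm w)^2"
    using w by (simp add: vnorm_power2 sum_lessThan_add_self sum_nonneg)
  then have "(\<Sum>i<n. (w ! i)^2) * (vnorm w)^2 \<le> (vnorm w)^2 * (vnorm w)^2"
    by (intro mult_right_mono) auto
  finally have "(vnorm ?T)^2 \<le> ((vnorm w)^2)^2"
    by (simp add: power2_eq_square)
  then have "vnorm ?T \<le> (vnorm w)^2"
    by (rule power2_le_imp_le) simp
  also have "\<dots> \<le> 2 * (1 + vnorm w)^2"
    by (simp add: power2_eq_square algebra_simps)
  finally show ?thesis .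
qed

lemma vdist_mult_halves_le:
  assumes w: "length w = n + n" and w': "length w' = n + n"
  shows "vdist (map (\<lambda>i. w ! i * w ! (n + i)) [0..<n]) (map (\<lambda>i. w' ! i * w' ! (n + i)) [0..<n])
    \<le> 2 * (1 + vnorm w + vnorm w')^1 * vdist w w'"
proof -
  let ?M = "vnorm w + vnorm w'" and ?s = "1 + vnorm w + vnorm w'"
  have "(vdist (map (\<lambda>i. w ! i * w ! (n + i)) [0..<n]) (map (\<lambda>i. w' ! i * w' ! (n + i)) [0..<n]))^2
      = (\<Sum>i<n. (w ! i * w ! (n + i) - w' ! i * w' ! (n + i))^2)"
    by (simp add: vdist_power2)
  also have "\<dots> \<le> (\<Sum>i<n. 2 * ?M^2 * ((w ! i - w' ! i)^2 + (w ! (n + i) - w' ! (n + i))^2))"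
  proof (rule sum_mono)
    fix i
    assume "i \<in> {..<n}"
    then have "\<bar>w ! (n + i)\<bar> \<le> vnorm w" "\<bar>w' ! i\<bar> \<le> vnorm w'"
      using w w' by (auto intro!: abs_nth_le_vnorm)
    then show "(w ! i * w ! (n + i) - w' ! i * w' ! (n + i))^2
        \<le> 2 * ?M^2 * ((w ! i - w' ! i)^2 + (w ! (n + i) - w' ! (n + i))^2)"
      by (intro mult_diff_power2_le) (auto simp: add_increasing add_increasing2)
  qed
  also have "\<dots> = 2 * ?M^2 * (vdist w w')^2"
    using w w' by (simp add: vdist_power2 sum_lessThan_add_self sum_distrib_left[symmetric] sum.distrib)
  also have "\<dots> \<le> 4 * ?s^2 * (vdist w w')^2"
  proof -
    have "?M^2 \<le> ?s^2"
      by (intro power_mono) auto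
    then have "2 * ?M^2 \<le> 4 * ?s^2"
      using zero_le_power2[of ?s] by linarith
    then show ?thesis
      by (intro mult_right_mono) auto
  qed
  also have "\<dots> = (2 * ?s * vdist w w')^2"
    by (simp add: power2_eq_square algebra_simps)
  finally have "vdist (map (\<lambda>i. w ! i * w ! (n + i)) [0..<n]) (map (\<lambda>i. w' ! i * w' ! (n + i)) [0..<n])
      \<le> 2 * ?s * vdist w w'"
    by (rule power2_le_imp_le) (simp add: add_nonneg_nonneg)
  then show ?thesis
    by simp
qed

lemma poly_lip_mult_halves:
  assumes "poly_lip n \<phi> C m"
  obtains C' m' where "poly_lip (n + n) (mult_halves n \<phi>) C' m'"
  using poly_lip_comp[OF assms, of "n + n" "\<lambda>w. map (\<lambda>i. w ! i * w ! (n + i)) [0..<n]" 2 2 1]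
    vnorm_mult_halves_le vdist_mult_halves_le that
  by (auto simp: mult_halves_def[abs_def])

text \<open>\<open>gauss_mean n \<phi> u\<close> is the classical expectation of \<open>\<phi>(u\<^sub>0 \<epsilon>\<^sub>0, \<dots>, u\<^sub>n\<^sub>-\<^sub>1 \<epsilon>\<^sub>n\<^sub>-\<^sub>1)\<close>; the Gaussians
  carry the indices \<open>n, \<dots>, 2n - 1\<close>, the positions they occupy as arguments of
  \<^const>\<open>mult_halves\<close>.\<close>

definition gauss_mean :: "nat \<Rightarrow> (real list \<Rightarrow> real) \<Rightarrow> real list \<Rightarrow> real" where
  "gauss_mean n \<phi> u = (\<integral>z. \<phi> (map (\<lambda>i. u ! i * z (n + i)) [0..<n]) \<partial>PiM {n..<n + n} (\<lambda>_. std_gauss))"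

lemma mult_halves_append:
  "length u = n \<Longrightarrow> mult_halves n \<phi> (u @ map z [n..<n + n]) = \<phi> (map (\<lambda>i. u ! i * z (n + i)) [0..<n])"
  unfolding mult_halves_def by (intro arg_cong[where f=\<phi>] map_cong) (auto simp: nth_append)

lemma gauss_iter_mult_halves:
  assumes "poly_lip (n + n) (mult_halves n \<phi>) C m" and "length u = n"
  shows "gauss_iter 1 (mult_halves n \<phi>) n u = gauss_mean n \<phi> u"
  using gauss_iter_eq_integral_PiM[OF assms(1), of n n u 1] assms(2)
  by (simp add: gauss_mean_def mult_halves_append)

lemma integrable_gauss_mean:
  assumes "poly_lip (n + n) (mult_halves n \<phi>) C m" and "length u = n"
  shows "integrable (PiM {n..<n + n} (\<lambda>_. std_gauss)) (\<lambda>z. \<phi> (map (\<lambda>i. u ! i * z (n + i)) [0..<n]))"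
  using integrable_PiM_gauss[OF assms(1), of u n 1] assms(2) by (simp add: mult_halves_append)

lemma gauss_mean_reflect:
  assumes \<phi>: "poly_lip (n + n) (mult_halves n \<phi>) C m" and u: "length u = n" and j: "j < n"
  shows "gauss_mean n \<phi> (u[j := - b]) = gauss_mean n \<phi> (u[j := b])"
proof -
  let ?I = "{n..<n + n} - {n + j}"
  let ?f = "\<lambda>v z. \<phi> (map (\<lambda>i. u[j := v] ! i * z (n + i)) [0..<n])"
  have I: "{n..<n + n} = insert (n + j) ?I" "n + j \<notin> ?I" "finite ?I"
    using j by auto
  have int: "integrable (PiM (insert (n + j) ?I) (\<lambda>_. std_gauss)) (?f v)" for v
    using integrable_gauss_mean[OF \<phi>, of "u[j := v]"] u unfolding I(1)[symmetric] by simp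
  have flip: "?f (- b) (x(n + j := y)) = ?f b (x(n + j := - y))" for x y
    using u j by (intro arg_cong[where f=\<phi>] map_cong) auto
  have reflect: "(\<integral>y. ?f (- b) (x(n + j := y)) \<partial>std_gauss) = (\<integral>y. ?f b (x(n + j := y)) \<partial>std_gauss)"
    if x: "x \<in> space (PiM ?I (\<lambda>_. std_gauss))" for x
  proof -
    have "(\<lambda>y. x(n + j := y)) \<in> measurable std_gauss (PiM (insert (n + j) ?I) (\<lambda>_. std_gauss))"
      using measurable_component_update[OF x I(2)] by simp
    from measurable_compose[OF this borel_measurable_integrable[OF int[of b]]]
    have "(\<lambda>y. ?f b (x(n + j := y))) \<in> borel_measurable std_gauss" .
    then show ?thesis
      unfolding flip by (rule integral_std_gauss_reflect)
  qed
  have "(\<integral>z. ?f (- b) z \<partial>PiM (insert (n + j) ?I) (\<lambda>_. std_gauss))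
      = (\<integral>x. (\<integral>y. ?f (- b) (x(n + j := y)) \<partial>std_gauss) \<partial>PiM ?I (\<lambda>_. std_gauss))"
    by (rule product_sigma_finite.product_integral_insert[OF product_sigma_finite_std_gauss I(3,2) int])
  also have "\<dots> = (\<integral>x. (\<integral>y. ?f b (x(n + j := y)) \<partial>std_gauss) \<partial>PiM ?I (\<lambda>_. std_gauss))"
    using reflect by (rule Bochner_Integration.integral_cong[OF refl])
  also have "\<dots> = (\<integral>z. ?f b z \<partial>PiM (insert (n + j) ?I) (\<lambda>_. std_gauss))"
    by (rule product_sigma_finite.product_integral_insert[OF product_sigma_finite_std_gauss I(3,2) int, symmetric])
  finally show ?thesis
    unfolding gauss_mean_def I(1)[symmetric] .
qed

lemma map2_convex_comb_update:
  fixes t p q :: real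
  assumes "length u = n" and "j < n"
  shows "map2 (\<lambda>x y. t * x + (1 - t) * y) (map (\<lambda>i. u[j := p] ! i * w i) [0..<n])
      (map (\<lambda>i. u[j := q] ! i * w i) [0..<n]) = map (\<lambda>i. u[j := t * p + (1 - t) * q] ! i * w i) [0..<n]"
  using assms by (intro nth_equalityI) (auto simp: nth_list_update algebra_simps)

lemma gauss_mean_convex_scale_mono:
  assumes \<phi>: "poly_lip (n + n) (mult_halves n \<phi>) C m" and u: "length u = n" and j: "j < n"
    and cvx: "convex_fn n \<phi>" and ab: "0 \<le> a" "a \<le> b"
  shows "gauss_mean n \<phi> (u[j := a]) \<le> gauss_mean n \<phi> (u[j := b])"
proof (cases "b = 0")
  case True
  then show ?thesis
    using ab by simp
next
  case False
  let ?PM = "PiM {n..<n + n} (\<lambda>_. std_gauss)"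
  let ?f = "\<lambda>v z. \<phi> (map (\<lambda>i. u[j := v] ! i * z (n + i)) [0..<n])"
  define t where "t = (a + b) / (2 * b)"
  have t: "0 \<le> t" "t \<le> 1" "t * b + (1 - t) * (- b) = a"
    using ab False by (auto simp: t_def field_simps)
  have "?f a z \<le> t * ?f b z + (1 - t) * ?f (- b) z" for z
    using cvx[unfolded convex_fn_def, rule_format, of "map (\<lambda>i. u[j := b] ! i * z (n + i)) [0..<n]"
        "map (\<lambda>i. u[j := - b] ! i * z (n + i)) [0..<n]" t] t(1,2)
      map2_convex_comb_update[OF u j, where t=t and p=b and q="- b" and w="\<lambda>i. z (n + i)", unfolded t(3)]
    by simp
  then have "gauss_mean n \<phi> (u[j := a]) \<le> (\<integral>z. t * ?f b z + (1 - t) * ?f (- b) z \<partial>?PM)"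
    unfolding gauss_mean_def using integrable_gauss_mean[OF \<phi>] u by (intro integral_mono) auto
  also have "\<dots> = t * gauss_mean n \<phi> (u[j := b]) + (1 - t) * gauss_mean n \<phi> (u[j := - b])"
    unfolding gauss_mean_def using integrable_gauss_mean[OF \<phi>] u by simp
  finally show ?thesis
    using gauss_mean_reflect[OF \<phi> u j] by (simp add: algebra_simps)
qed

lemma gauss_mean_le_extreme_scale:
  assumes \<phi>: "poly_lip (n + n) (mult_halves n \<phi>) C m" and u: "length u = n" and j: "j < n"
    and cc: "convex_or_concave b n \<phi>" and sl: "0 \<le> sl" and v: "v \<in> {sl..su}"
  shows "gauss_mean n \<phi> (u[j := v]) \<le> gauss_mean n \<phi> (u[j := extreme_scale b sl su])"
proof (cases b)
  case True
  then show ?thesis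
    using gauss_mean_convex_scale_mono[OF \<phi> u j] cc sl v
    by (simp add: convex_or_concave_def extreme_scale_def)
next
  case False
  have "mult_halves n (\<lambda>x. - \<phi> x) = (\<lambda>w. - mult_halves n \<phi> w)"
    by (simp add: mult_halves_def[abs_def])
  then have "poly_lip (n + n) (mult_halves n (\<lambda>x. - \<phi> x)) C m"
    using poly_lip_uminus[OF \<phi>] by simp
  from gauss_mean_convex_scale_mono[OF this u j] have "- gauss_mean n \<phi> (u[j := sl]) \<le> - gauss_mean n \<phi> (u[j := v])"
    using False cc sl v by (simp add: convex_or_concave_def concave_fn_def gauss_mean_def)
  then show ?thesis
    using False by (simp add: extreme_scale_def)
qed

lemma gauss_iter_mult_halves_replicate:
  "length x + j = n \<Longrightarrow> gauss_iter 1 (mult_halves n \<phi>) j (replicate n s @ x) = gauss_iter s \<phi> j (map ((*) s) x)"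
proof (induction j arbitrary: x)
  case 0
  then have "map (\<lambda>i. (replicate n s @ x) ! i * (replicate n s @ x) ! (n + i)) [0..<n] = map ((*) s) x"
    by (intro nth_equalityI) (auto simp: nth_append)
  then show ?case
    by (simp add: mult_halves_def)
next
  case (Suc j)
  then show ?case
    using Suc.IH[of "x @ [t]" for t] by (simp add: gauss_step_def)
qed

lemma sublinear_space_mult:
  assumes ss: "sublinear_space M P H" and "A \<in> H" "B \<in> H"
  shows "(\<lambda>\<omega>. A \<omega> * B \<omega>) \<in> H"
proof -
  obtain C m where "poly_lip (1 + 1) (mult_halves 1 hd) C m"
    using poly_lip_mult_halves[OF poly_lip_hd] .
  then have "(\<lambda>\<omega>. mult_halves 1 hd (vals [A, B] \<omega>)) \<in> H"
    using assms by (intro sublinear_space_poly_lip_comp[OF ss]) auto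
  then show ?thesis
    by (simp add: mult_halves_def vals_def)
qed

section \<open>Distributions of the scale and of the noise\<close>

lemma poly_lip_mult_last:
  assumes F: "poly_lip (Suc k) F C m" and c: "length c = k"
  obtains C' m' where "poly_lip 2 (\<lambda>w. F (c @ [w ! 0 * w ! 1])) C' m'"
proof -
  have "poly_lip 1 (\<lambda>x. F (c @ x @ [])) (C * (1 + 2 * vnorm c + 2 * vnorm [])^m) m"
    using poly_lip_fix_coords[of k 1 0 F C m c "[]"] F c by simp
  then obtain C' m' where "poly_lip (1 + 1) (mult_halves 1 (\<lambda>x. F (c @ x @ []))) C' m'"
    by (rule poly_lip_mult_halves)
  moreover have "mult_halves 1 (\<lambda>x. F (c @ x @ [])) = (\<lambda>w. F (c @ [w ! 0 * w ! 1]))"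
    by (simp add: mult_halves_def fun_eq_iff)
  ultimately show ?thesis
    using that by (simp add: numeral_2_eq_2)
qed

lemma sE_std_normal_last:
  assumes e: "std_normal_dist P e" and F: "poly_lip (Suc k) F C m" and c: "length c = k"
  shows "sE P (\<lambda>\<omega>. F (c @ [v * e \<omega>])) = gauss_step v F c"
proof -
  obtain C' m' where "poly_lip 2 (\<lambda>w. F (c @ [w ! 0 * w ! 1])) C' m'"
    using poly_lip_mult_last[OF F c] .
  then have "poly_lip 1 (\<lambda>l. F (c @ [v * l ! 0])) (C' * (1 + 2 * vnorm [v] + 2 * vnorm [])^m') m'"
    using poly_lip_fix_coords[of 1 1 0 "\<lambda>w. F (c @ [w ! 0 * w ! 1])" C' m' "[v]" "[]"]
    by (simp add: numeral_2_eq_2)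
  from e[unfolded std_normal_dist_def, rule_format, OF poly_lip_imp_lLip[OF this]] show ?thesis
    by (simp add: gauss_step_def)
qed

lemma sE_maximal_last:
  assumes V: "maximal_dist P V sl su" and F: "poly_lip (Suc k) F C m" and c: "length c = k"
  shows "sE P (\<lambda>\<omega>. F (c @ [V \<omega>])) = (SUP v\<in>{sl..su}. F (c @ [v]))"
proof -
  have "poly_lip 1 (\<lambda>l. F (c @ l @ [])) (C * (1 + 2 * vnorm c + 2 * vnorm [])^m) m"
    using poly_lip_fix_coords[of k 1 0 F C m c "[]"] F c by simp
  from V[unfolded maximal_dist_def, rule_format, OF poly_lip_imp_lLip[OF this]] show ?thesis
    by simp
qed

lemma sE_scaled_normal_last:
  assumes ss: "sublinear_space M P H" and VH: "V \<in> H" and eH: "e \<in> H"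
    and V: "maximal_dist P V sl su" and e: "std_normal_dist P e" and Ve: "indep_of P [V] e"
    and F: "poly_lip (Suc k) F C m" and c: "length c = k" and cc: "convex_or_concave b (Suc k) F"
    and sig: "0 \<le> sl" "sl \<le> su"
  shows "sE P (\<lambda>\<omega>. F (c @ [V \<omega> * e \<omega>])) = gauss_step (extreme_scale b sl su) F c"
proof -
  obtain C' m' where \<chi>: "poly_lip 2 (\<lambda>w. F (c @ [w ! 0 * w ! 1])) C' m'"
    using poly_lip_mult_last[OF F c] .
  have "sE P (\<lambda>\<omega>. F (c @ [V \<omega> * e \<omega>])) = sE P (\<lambda>\<omega>. sE P (\<lambda>\<omega>'. F (c @ [V \<omega> * e \<omega>'])))"
    using indep_of_poly_lip[OF ss _ eH Ve, of "\<lambda>w. F (c @ [w ! 0 * w ! 1])"] \<chi> VH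
    by (simp add: numeral_2_eq_2)
  also have "\<dots> = sE P (\<lambda>\<omega>. gauss_step (V \<omega>) F c)"
    using sE_std_normal_last[OF e F c] by simp
  also have "\<dots> = (SUP v\<in>{sl..su}. gauss_step v F c)"
  proof -
    have "poly_lip (Suc 0) (gauss_step 1 (\<lambda>w. F (c @ [w ! 0 * w ! 1]))) (C' * (\<integral>t. (1 + 2 * \<bar>1 * t\<bar>)^m' \<partial>std_gauss)) m'"
      using poly_lip_gauss_step[of 1 _ C' m' 1] \<chi> by (simp add: numeral_2_eq_2)
    from sE_maximal_last[OF V this, of "[]"] show ?thesis
      by (simp add: gauss_step_def)
  qed
  also have "\<dots> = gauss_step (extreme_scale b sl su) F c"
    using gauss_step_le_extreme_scale[OF F c cc sig(1)] extreme_scale_in[OF sig(2)]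
    by (intro cSup_eq_maximum) auto
  finally show ?thesis .
qed

section \<open>The two independence structures\<close>

lemma sE_seq_indep_products:
  assumes ss: "sublinear_space M P H" and sig: "0 \<le> sl" "sl \<le> su"
    and inH: "\<And>i. i < n \<Longrightarrow> V i \<in> H \<and> e i \<in> H"
    and V: "\<And>i. i < n \<Longrightarrow> maximal_dist P (V i) sl su"
    and e: "\<And>i. i < n \<Longrightarrow> std_normal_dist P (e i)"
    and Ve: "\<And>i. i < n \<Longrightarrow> indep_of P [V i] (e i)"
    and \<phi>: "poly_lip n \<phi> C m" and cc: "convex_or_concave b n \<phi>"
    and ind: "seq_indep P (map (\<lambda>i \<omega>. V i \<omega> * e i \<omega>) [0..<n])"
  shows "sE P (\<lambda>\<omega>. \<phi> (map (\<lambda>i. V i \<omega> * e i \<omega>) [0..<n])) = classical_E n \<phi> (extreme_scale b sl su)"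
proof -
  let ?s = "extreme_scale b sl su" and ?Ws = "map (\<lambda>i \<omega>. V i \<omega> * e i \<omega>) [0..<n]"
  have "sE P (\<lambda>\<omega>. gauss_iter ?s \<phi> (n - length ?Ws) (vals ?Ws \<omega>)) = gauss_iter ?s \<phi> (n - 0) []"
  proof (rule sE_seq_indep_backward[OF ss _ ind])
    show "set ?Ws \<subseteq> H"
      using sublinear_space_mult[OF ss] inH by auto
    show "\<exists>C m. poly_lip k (gauss_iter ?s \<phi> (n - k)) C m" if "k \<le> length ?Ws" for k
    proof -
      have "poly_lip (k + (n - k)) \<phi> C m"
        using \<phi> that by simp
      from poly_lip_gauss_iter[OF this] show ?thesis
        by blast
    qed
    fix k and c :: "real list"
    assume k: "k < length ?Ws" and c: "length c = k"
    then have nk: "k + (n - Suc k) = n - 1 + 0" "Suc k + (n - Suc k) = n" "n - k = Suc (n - Suc k)"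
      by auto
    obtain C' m' where F: "poly_lip (Suc k) (gauss_iter ?s \<phi> (n - Suc k)) C' m'"
      using poly_lip_gauss_iter[of "Suc k" "n - Suc k" \<phi> C m ?s] \<phi> nk by auto
    have "convex_or_concave b (Suc k) (gauss_iter ?s \<phi> (n - Suc k))"
      using convex_or_concave_gauss_iter[of "Suc k" "n - Suc k" \<phi> C m b ?s] \<phi> cc nk by simp
    then show "sE P (\<lambda>\<omega>. gauss_iter ?s \<phi> (n - Suc k) (c @ [(?Ws ! k) \<omega>])) = gauss_iter ?s \<phi> (n - k) c"
      using sE_scaled_normal_last[OF ss _ _ V e Ve F c _ sig] inH k nk(3) by simp
  qed
  then show ?thesis
    using classical_E_eq_gauss_iter[OF \<phi>] by (simp add: vals_def comp_def)
qed

lemma sE_maximal_scale_step: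
  assumes V: "maximal_dist P V sl su" and \<phi>: "poly_lip (n + n) (mult_halves n \<phi>) C m"
    and cc: "convex_or_concave b n \<phi>" and sig: "0 \<le> sl" "sl \<le> su"
    and k: "k < n" and c: "length c = k"
  defines "s \<equiv> extreme_scale b sl su"
  shows "sE P (\<lambda>\<omega>. gauss_iter 1 (mult_halves n \<phi>) n (c @ [V \<omega>] @ replicate (n - Suc k) s))
    = gauss_iter 1 (mult_halves n \<phi>) n (c @ replicate (n - k) s)"
proof -
  let ?G = "gauss_iter 1 (mult_halves n \<phi>) n"
  obtain C' m' where "poly_lip n ?G C' m'"
    using poly_lip_gauss_iter[of n n "mult_halves n \<phi>" C m 1] \<phi> by auto
  then have "poly_lip (Suc k) (\<lambda>x. ?G ([] @ x @ replicate (n - Suc k) s))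
      (C' * (1 + 2 * vnorm [] + 2 * vnorm (replicate (n - Suc k) s))^m') m'"
    using k by (intro poly_lip_fix_coords[where a=0 and d="n - Suc k"]) auto
  from sE_maximal_last[OF V this c]
  have "sE P (\<lambda>\<omega>. ?G (c @ [V \<omega>] @ replicate (n - Suc k) s)) = (SUP v\<in>{sl..su}. ?G (c @ [v] @ replicate (n - Suc k) s))"
    by simp
  also have "\<dots> = ?G (c @ [s] @ replicate (n - Suc k) s)"
  proof (rule cSup_eq_maximum)
    let ?u = "c @ [s] @ replicate (n - Suc k) s"
    have u: "length ?u = n" and upd: "?u[k := v] = c @ [v] @ replicate (n - Suc k) s" for v
      using c k by (auto simp: list_update_append)
    show "?G (c @ [s] @ replicate (n - Suc k) s) \<in> (\<lambda>v. ?G (c @ [v] @ replicate (n - Suc k) s)) ` {sl..su}"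
      using extreme_scale_in[OF sig(2)] by (auto simp: s_def)
    show "y \<le> ?G (c @ [s] @ replicate (n - Suc k) s)" if "y \<in> (\<lambda>v. ?G (c @ [v] @ replicate (n - Suc k) s)) ` {sl..su}" for y
      using that gauss_mean_le_extreme_scale[OF \<phi> u k cc sig(1)] gauss_iter_mult_halves[OF \<phi>] u upd
      by (auto simp: s_def simp del: append.simps)
  qed
  also have "c @ [s] @ replicate (n - Suc k) s = c @ replicate (n - k) s"
    using k by (simp flip: replicate_Suc add: Suc_diff_Suc)
  finally show ?thesis .
qed

text \<open>\<open>semi_seq_value n \<phi> s k\<close> is what remains once all but the first \<open>k\<close> of
  \<open>V\<^sub>1, \<dots>, V\<^sub>n, \<epsilon>\<^sub>1, \<dots>, \<epsilon>\<^sub>n\<close> are eliminated: the noises by Gaussian integration, the scales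
  (for \<open>k < n\<close>) by setting them to the extreme scale \<open>s\<close>.\<close>

definition semi_seq_value :: "nat \<Rightarrow> (real list \<Rightarrow> real) \<Rightarrow> real \<Rightarrow> nat \<Rightarrow> real list \<Rightarrow> real" where
  "semi_seq_value n \<phi> s k = (if n \<le> k then gauss_iter 1 (mult_halves n \<phi>) (n + n - k)
     else (\<lambda>c. gauss_iter 1 (mult_halves n \<phi>) n (c @ replicate (n - k) s)))"

lemma poly_lip_semi_seq_value:
  assumes \<phi>: "poly_lip (n + n) (mult_halves n \<phi>) C m" and k: "k \<le> n + n"
  shows "\<exists>C m. poly_lip k (semi_seq_value n \<phi> s k) C m"
proof -
  have G: "\<exists>C' m'. poly_lip j (gauss_iter 1 (mult_halves n \<phi>) (n + n - j)) C' m'" if "j \<le> n + n" for j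
  proof -
    have "poly_lip (j + (n + n - j)) (mult_halves n \<phi>) C m"
      using \<phi> that by simp
    from poly_lip_gauss_iter[OF this] show ?thesis
      by blast
  qed
  show ?thesis
  proof (cases "n \<le> k")
    case False
    obtain C' m' where "poly_lip (0 + k + (n - k)) (gauss_iter 1 (mult_halves n \<phi>) n) C' m'"
      using G[of n] False by auto
    from poly_lip_fix_coords[OF this, of "[]" "replicate (n - k) s"] False show ?thesis
      by (auto simp: semi_seq_value_def)
  qed (use G k in \<open>auto simp: semi_seq_value_def\<close>)
qed

lemma sE_semi_seq_indep_products:
  assumes ss: "sublinear_space M P H" and sig: "0 \<le> sl" "sl \<le> su"
    and inH: "\<And>i. i < n \<Longrightarrow> V i \<in> H \<and> e i \<in> H"
    and V: "\<And>i. i < n \<Longrightarrow> maximal_dist P (V i) sl su"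
    and e: "\<And>i. i < n \<Longrightarrow> std_normal_dist P (e i)"
    and \<phi>: "poly_lip n \<phi> C m" and cc: "convex_or_concave b n \<phi>"
    and ind: "seq_indep P (map V [0..<n] @ map e [0..<n])"
  shows "sE P (\<lambda>\<omega>. \<phi> (map (\<lambda>i. V i \<omega> * e i \<omega>) [0..<n])) = classical_E n \<phi> (extreme_scale b sl su)"
proof -
  let ?s = "extreme_scale b sl su" and ?Zs = "map V [0..<n] @ map e [0..<n]"
  let ?F = "semi_seq_value n \<phi> ?s"
  obtain CB mB where B: "poly_lip (n + n) (mult_halves n \<phi>) CB mB"
    using poly_lip_mult_halves[OF \<phi>] .
  have "sE P (\<lambda>\<omega>. ?F (length ?Zs) (vals ?Zs \<omega>)) = ?F 0 []"
  proof (rule sE_seq_indep_backward[OF ss _ ind])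
    show "set ?Zs \<subseteq> H"
      using inH by auto
    show "\<exists>C m. poly_lip k (?F k) C m" if "k \<le> length ?Zs" for k
      using poly_lip_semi_seq_value[OF B] that by simp
    fix k and c :: "real list"
    assume k: "k < length ?Zs" and c: "length c = k"
    show "sE P (\<lambda>\<omega>. ?F (Suc k) (c @ [(?Zs ! k) \<omega>])) = ?F k c"
    proof (cases "n \<le> k")
      case True
      obtain C' m' where "poly_lip (Suc k) (?F (Suc k)) C' m'"
        using poly_lip_semi_seq_value[OF B, of "Suc k"] k by fastforce
      moreover have "n + n - k = Suc (n + n - Suc k)"
        using k by simp
      ultimately show ?thesis
        using sE_std_normal_last[OF e[of "k - n"] _ c, of _ _ _ 1] True k
        by (simp add: semi_seq_value_def nth_append)
    next
      case False
      with sE_maximal_scale_step[OF V[of k] B cc sig, of k c] c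
      show ?thesis
        by (cases "Suc k = n") (auto simp: semi_seq_value_def nth_append)
    qed
  qed
  moreover have "?F (length ?Zs) (vals ?Zs \<omega>) = \<phi> (map (\<lambda>i. V i \<omega> * e i \<omega>) [0..<n])" for \<omega>
    by (auto simp: semi_seq_value_def mult_halves_def vals_def nth_append intro!: arg_cong[where f=\<phi>])
  moreover have "?F 0 [] = classical_E n \<phi> ?s"
    using gauss_iter_mult_halves_replicate[of "[]" n n \<phi> ?s] classical_E_eq_gauss_iter[OF \<phi>]
    by (simp add: semi_seq_value_def mult_halves_def)
  ultimately show ?thesis
    by simp
qed

theorem mainTheorem12:
  fixes M :: "'a measure" and P :: "'a measure set" and H :: "('a \<Rightarrow> real) set"
    and V e :: "nat \<Rightarrow> 'a \<Rightarrow> real" and n :: nat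
    and sl su :: real and \<phi> :: "real list \<Rightarrow> real"
  assumes space: "sublinear_space M P H"
    and sig: "0 \<le> sl" "sl \<le> su"
    and inH: "\<And>i. i < n \<Longrightarrow> V i \<in> H \<and> e i \<in> H"
    and Vdist: "\<And>i. i < n \<Longrightarrow> maximal_dist P (V i) sl su"
    and edist: "\<And>i. i < n \<Longrightarrow> std_normal_dist P (e i)"
    and decomp: "\<And>i. i < n \<Longrightarrow> indep_of P [V i] (e i)"
    and phi: "lLip n \<phi>"
    and cc: "convex_fn n \<phi> \<or> concave_fn n \<phi>"
    and indep: "seq_indep P (map (\<lambda>i \<omega>. V i \<omega> * e i \<omega>) [0..<n])
             \<or> seq_indep P (map V [0..<n] @ map e [0..<n])"
  shows "(concave_fn n \<phi> \<longrightarrow>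
            sE P (\<lambda>\<omega>. \<phi> (map (\<lambda>i. V i \<omega> * e i \<omega>) [0..<n])) = classical_E n \<phi> sl)
       \<and> (convex_fn n \<phi> \<longrightarrow>
            sE P (\<lambda>\<omega>. \<phi> (map (\<lambda>i. V i \<omega> * e i \<omega>) [0..<n])) = classical_E n \<phi> su)"
proof -
  obtain C m where \<phi>: "poly_lip n \<phi> C m"
    using lLip_imp_poly_lip[OF phi] .
  have "sE P (\<lambda>\<omega>. \<phi> (map (\<lambda>i. V i \<omega> * e i \<omega>) [0..<n])) = classical_E n \<phi> (extreme_scale b sl su)"
    if "convex_or_concave b n \<phi>" for b
    using indep
  proof
    assume "seq_indep P (map (\<lambda>i \<omega>. V i \<omega> * e i \<omega>) [0..<n])"
    then show ?thesis
      using sE_seq_indep_products[where V=V and e=e, OF space sig inH Vdist edist decomp \<phi> that] by blast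
  next
    assume "seq_indep P (map V [0..<n] @ map e [0..<n])"
    then show ?thesis
      using sE_semi_seq_indep_products[where V=V and e=e, OF space sig inH Vdist edist \<phi> that] by blast
  qed
  from this[of False] this[of True] show ?thesis
    by (simp add: convex_or_concave_def extreme_scale_def)
qed

end
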